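(* Let $\Gamma\subseteq A$ be $\Bbbk$-algebras, $\sim$ an equivalence relation on $\mathrm{cfs}(\Gamma)$, and suppose $\Gamma$ is a strong Harish-Chandra block subalgebra of $A$ with respect to $\sim$. Let $F$ be a profinite $\mathcal A$-module. Then for $a\in A$ and $v\in F(B)$, the element $F_{B,C}((a))v$ is nonzero for only finitely many $C$, and $\mathcal H(F):=\bigoplus_{B}F(B)$ with the action $a.v:=\sum_CF_{B,C}((a))v$ (for $v\in F(B)$) is a Harish-Chandra block module. Furthermore, if $F$ is a discrete $\mathcal A$-module, then $\mathcal H(F)$ is a strong Harish-Chandra block module.
   Context: $\mathrm{cfs}(\Gamma)$: maximal two-sided ideals $\mathfrak m$ with $\dim\Gamma/\mathfrak m<\infty$. For a class $B$, $\mathcal W(B)=\{\mathfrak m_1\cdots\mathfrak m_k:k\ge0,\mathfrak m_i\in B\}$. For a left $\Gamma$-module $V$, $V(B)=\{v:\mathfrak mv=0$ for some $\mathfrak m\in\mathcal W(B)\}$ (right modules analogously); block module: $V=\bigoplus_BV(B)$; strong block module: additionally each $V(B)$ is killed by some $\mathfrak m\in\mathcal W(B)$. A (strong) Harish-Chandra block module is an $A$-module that is a (strong) block module over $\Gamma$. $\Gamma$ is a strong Harish-Chandra block subalgebra if for all $B$, $\mathfrak m\in\mathcal W(B)$, the left module $A/A\mathfrak m$ and the right module $A/\mathfrak mA$ are strong block modules. $\mathcal A$ is the category with objects $\mathrm{cfs}(\Gamma)/{\sim}$, morphisms $\mathcal A(B,C)=\varprojlim_{\mathfrak n\in\mathcal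 W(C),\mathfrak m\in\mathcal W(B)}A/(\mathfrak nA+A\mathfrak m)$, and composition defined by: for $\mathfrak m\in\mathcal W(B)$, $\mathfrak l\in\mathcal W(D)$ choose $\mathfrak n\in\mathcal W(C)$ with $A/(\mathfrak lA+A\mathfrak n)\cong(A/\mathfrak lA)(C)$ and $A/(\mathfrak nA+A\mathfrak m)\cong(A/A\mathfrak m)(C)$ naturally; pick representatives $a_0$ of $\alpha_{\mathfrak m,\mathfrak n}$ with $a_0+A\mathfrak m\in(A/A\mathfrak m)(C)$ and $b_0$ of $\beta_{\mathfrak n,\mathfrak l}$ with $b_0+\mathfrak lA\in(A/\mathfrak lA)(C)$; set $(\beta\circ\alpha)_{\mathfrak m,\mathfrak l}=b_0a_0+\mathfrak lA+A\mathfrak m$. $(a)$ denotes the image of $a\in A$ in $\mathcal A(B,C)$. $\mathcal A(B,C)$ carries the inverse limit topology of the discrete quotients; $\mathrm{Hom}_\Bbbk(V,W)$ carries either the discrete topology or the limit topology $\varprojlim_U\mathrm{Hom}_\Bbbk(U,W)$ over finite-dimensional $U\le V$ (each factor discrete). A profinite (resp. discrete) $\mathcal A$-module is a functor $F:\mathcal A\to\mathbf{Vect}_\Bbbk$ with each $F_{B,C}$ a continuous linear map for the limit (resp. discrete) topology. *)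

theory Defs
  imports Complex_Main "HOL-Library.Function_Algebras"
begin

text \<open>
  The algebra A is the whole of a type
  'a::ring_1 together with a scalar multiplication sa making it a k-algebra.  The
  subalgebra Gamma is a subset G of 'a.
\<close>

definition kalg :: "('k::field \<Rightarrow> 'a::ring_1 \<Rightarrow> 'a) \<Rightarrow> bool" where
  "kalg sa \<longleftrightarrow> vector_space sa \<and>
     (\<forall>c x y. sa c (x * y) = sa c x * y \<and> sa c (x * y) = x * sa c y)"

definition subalg :: "('k::field \<Rightarrow> 'a::ring_1 \<Rightarrow> 'a) \<Rightarrow> 'a set \<Rightarrow> bool" where
  "subalg sa G \<longleftrightarrow> 1 \<in> G \<and> 0 \<in> G \<and> (\<forall>x\<in>G. \<forall>y\<in>G. x + y \<in> G \<and> x * y \<in> G)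
     \<and> (\<forall>c. \<forall>x\<in>G. sa c x \<in> G)"

definition tsideal :: "('k::field \<Rightarrow> 'a::ring_1 \<Rightarrow> 'a) \<Rightarrow> 'a set \<Rightarrow> 'a set \<Rightarrow> bool" where
  "tsideal sa G I \<longleftrightarrow> I \<subseteq> G \<and> 0 \<in> I \<and> (\<forall>x\<in>I. \<forall>y\<in>I. x + y \<in> I)
     \<and> (\<forall>c. \<forall>x\<in>I. sa c x \<in> I) \<and> (\<forall>g\<in>G. \<forall>x\<in>I. g * x \<in> I \<and> x * g \<in> I)"

text \<open>cfs(Gamma): maximal two-sided ideals of finite codimension (dim Gamma/m finite)\<close>
definition cfs :: "('k::field \<Rightarrow> 'a::ring_1 \<Rightarrow> 'a) \<Rightarrow> 'a set \<Rightarrow> 'a set set" where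
  "cfs sa G = {m. tsideal sa G m \<and> m \<noteq> G \<and>
     (\<forall>I. tsideal sa G I \<and> m \<subseteq> I \<and> I \<noteq> G \<longrightarrow> I = m) \<and>
     (\<exists>S. finite S \<and> S \<subseteq> G \<and> G \<subseteq> module.span sa (S \<union> m))}"

text \<open>the objects of the category: cfs(Gamma)/~\<close>
definition objs :: "('k::field \<Rightarrow> 'a::ring_1 \<Rightarrow> 'a) \<Rightarrow> 'a set \<Rightarrow> ('a set \<times> 'a set) set
     \<Rightarrow> 'a set set set" where
  "objs sa G R = cfs sa G // R"

definition iprod :: "('k::field \<Rightarrow> 'a::ring_1 \<Rightarrow> 'a) \<Rightarrow> 'a set \<Rightarrow> 'a set \<Rightarrow> 'a set" where
  "iprod sa I J = module.span sa {x * y | x y. x \<in> I \<and> y \<in> J}"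

text \<open>W(B) = {m_1 ... m_k : k >= 0, m_i in B}; the empty product is Gamma itself\<close>
inductive_set WB :: "('k::field \<Rightarrow> 'a::ring_1 \<Rightarrow> 'a) \<Rightarrow> 'a set \<Rightarrow> 'a set set \<Rightarrow> 'a set set"
  for sa G B where
  WB_one: "G \<in> WB sa G B"
| WB_mult: "m \<in> WB sa G B \<Longrightarrow> p \<in> B \<Longrightarrow> iprod sa m p \<in> WB sa G B"

definition lid :: "('k::field \<Rightarrow> 'a::ring_1 \<Rightarrow> 'a) \<Rightarrow> 'a set \<Rightarrow> 'a set" where
  "lid sa m = iprod sa UNIV m"
definition rid :: "('k::field \<Rightarrow> 'a::ring_1 \<Rightarrow> 'a) \<Rightarrow> 'a set \<Rightarrow> 'a set" where
  "rid sa n = iprod sa n UNIV"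

definition Jid :: "('k::field \<Rightarrow> 'a::ring_1 \<Rightarrow> 'a) \<Rightarrow> 'a set \<Rightarrow> 'a set \<Rightarrow> 'a set" where
  "Jid sa m n = {x + y | x y. x \<in> rid sa n \<and> y \<in> lid sa m}"

definition coset :: "'a::ab_group_add set \<Rightarrow> 'a \<Rightarrow> 'a set" where
  "coset J a = (\<lambda>x. a + x) ` J"

text \<open>Modules over Gamma are given by an action act on a carrier M modulo a submodule N
  (so the module is M/N; for N = {0} it is M itself).
  v + N lies in V(B) iff some m in W(B) kills it.\<close>
definition bpart :: "('k::field \<Rightarrow> 'a::ring_1 \<Rightarrow> 'a) \<Rightarrow> 'a set \<Rightarrow> 'a set set
     \<Rightarrow> ('a \<Rightarrow> 'm \<Rightarrow> 'm) \<Rightarrow> 'm set \<Rightarrow> 'm \<Rightarrow> bool" where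
  "bpart sa G B act N v \<longleftrightarrow> (\<exists>m\<in>WB sa G B. \<forall>x\<in>m. act x v \<in> N)"

text \<open>block module: V = direct sum of the V(B), B ranging over cfs(Gamma)/~\<close>
definition block_module :: "('k::field \<Rightarrow> 'a::ring_1 \<Rightarrow> 'a) \<Rightarrow> 'a set \<Rightarrow> ('a set \<times> 'a set) set
     \<Rightarrow> 'm::ab_group_add set \<Rightarrow> 'm set \<Rightarrow> ('a \<Rightarrow> 'm \<Rightarrow> 'm) \<Rightarrow> bool" where
  "block_module sa G R M N act \<longleftrightarrow>
     (\<forall>v\<in>M. \<exists>S f. finite S \<and> S \<subseteq> objs sa G R \<and>
        (\<forall>B\<in>S. f B \<in> M \<and> bpart sa G B act N (f B)) \<and> v - (\<Sum>B\<in>S. f B) \<in> N) \<and>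
     (\<forall>S f. finite S \<and> S \<subseteq> objs sa G R \<and>
        (\<forall>B\<in>S. f B \<in> M \<and> bpart sa G B act N (f B)) \<and> (\<Sum>B\<in>S. f B) \<in> N
        \<longrightarrow> (\<forall>B\<in>S. f B \<in> N))"

definition strong_block_module :: "('k::field \<Rightarrow> 'a::ring_1 \<Rightarrow> 'a) \<Rightarrow> 'a set
     \<Rightarrow> ('a set \<times> 'a set) set \<Rightarrow> 'm::ab_group_add set \<Rightarrow> 'm set \<Rightarrow> ('a \<Rightarrow> 'm \<Rightarrow> 'm) \<Rightarrow> bool" where
  "strong_block_module sa G R M N act \<longleftrightarrow> block_module sa G R M N act \<and>
     (\<forall>B\<in>objs sa G R. \<exists>m\<in>WB sa G B. \<forall>v\<in>M. bpart sa G B act N v \<longrightarrow> (\<forall>x\<in>m. act x v \<in> N))"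

text \<open>strong Harish-Chandra block subalgebra: A/Am (left) and A/mA (right) are strong
  block modules over Gamma\<close>
definition strong_HC_block_subalg :: "('k::field \<Rightarrow> 'a::ring_1 \<Rightarrow> 'a) \<Rightarrow> 'a set
     \<Rightarrow> ('a set \<times> 'a set) set \<Rightarrow> bool" where
  "strong_HC_block_subalg sa G R \<longleftrightarrow> (\<forall>B\<in>objs sa G R. \<forall>m\<in>WB sa G B.
     strong_block_module sa G R UNIV (lid sa m) (\<lambda>x v. x * v) \<and>
     strong_block_module sa G R UNIV (rid sa m) (\<lambda>x v. v * x))"

text \<open>Morphisms of the category calA: elements of the inverse limit
  lim_{n in W(C), m in W(B)} A/(nA + Am), represented as compatible families of cosets
  alpha m n (a coset of nA + Am), with the value {} outside the index set.\<close>
type_synonym 'a hom = "'a set \<Rightarrow> 'a set \<Rightarrow> 'a set"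

definition homset :: "('k::field \<Rightarrow> 'a::ring_1 \<Rightarrow> 'a) \<Rightarrow> 'a set \<Rightarrow> 'a set set \<Rightarrow> 'a set set
     \<Rightarrow> 'a hom set" where
  "homset sa G B C = {\<alpha>.
     (\<forall>m n. m \<in> WB sa G B \<and> n \<in> WB sa G C \<longrightarrow> (\<exists>a. \<alpha> m n = coset (Jid sa m n) a)) \<and>
     (\<forall>m n. \<not> (m \<in> WB sa G B \<and> n \<in> WB sa G C) \<longrightarrow> \<alpha> m n = {}) \<and>
     (\<forall>m m' n n'. m \<in> WB sa G B \<and> m' \<in> WB sa G B \<and> n \<in> WB sa G C \<and> n' \<in> WB sa G C
        \<and> m \<subseteq> m' \<and> n \<subseteq> n' \<longrightarrow> \<alpha> m n \<subseteq> \<alpha> m' n')}"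

definition hom_of :: "('k::field \<Rightarrow> 'a::ring_1 \<Rightarrow> 'a) \<Rightarrow> 'a set \<Rightarrow> 'a \<Rightarrow> 'a set set \<Rightarrow> 'a set set
     \<Rightarrow> 'a hom" where
  "hom_of sa G a B C = (\<lambda>m n. if m \<in> WB sa G B \<and> n \<in> WB sa G C then coset (Jid sa m n) a else {})"

definition hom_add :: "'a::ring_1 hom \<Rightarrow> 'a hom \<Rightarrow> 'a hom" where
  "hom_add \<alpha> \<beta> = (\<lambda>m n. {x + y | x y. x \<in> \<alpha> m n \<and> y \<in> \<beta> m n})"

definition hom_scale :: "('k::field \<Rightarrow> 'a::ring_1 \<Rightarrow> 'a) \<Rightarrow> 'k \<Rightarrow> 'a hom \<Rightarrow> 'a hom" where
  "hom_scale sa c \<alpha> = (\<lambda>m n. if \<alpha> m n = {} then {}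
      else coset (Jid sa m n) (sa c (SOME x. x \<in> \<alpha> m n)))"

text \<open>Composition in calA, exactly as in the paper: for m in W(B), l in W(D), choose n in W(C)
  such that the natural maps (A/lA)(C) -> A/(lA+An) and (A/Am)(C) -> A/(nA+Am) are
  isomorphisms, representatives a0 of alpha_{m,n} with a0 + Am in (A/Am)(C) and b0 of
  beta_{n,l} with b0 + lA in (A/lA)(C), and put (beta o alpha)_{m,l} = b0 a0 + lA + Am.\<close>
definition comp_ok :: "('k::field \<Rightarrow> 'a::ring_1 \<Rightarrow> 'a) \<Rightarrow> 'a set \<Rightarrow> 'a set set
     \<Rightarrow> 'a hom \<Rightarrow> 'a hom \<Rightarrow> 'a set \<Rightarrow> 'a set \<Rightarrow> 'a set \<times> 'a \<times> 'a \<Rightarrow> bool" where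
  "comp_ok sa G C \<beta> \<alpha> m l = (\<lambda>(n, a0, b0). n \<in> WB sa G C \<and>
     (\<forall>a. \<exists>a'. bpart sa G C (\<lambda>x v. v * x) (rid sa l) a' \<and> a - a' \<in> Jid sa n l) \<and>
     (\<forall>a'. bpart sa G C (\<lambda>x v. v * x) (rid sa l) a' \<and> a' \<in> Jid sa n l \<longrightarrow> a' \<in> rid sa l) \<and>
     (\<forall>a. \<exists>a'. bpart sa G C (\<lambda>x v. x * v) (lid sa m) a' \<and> a - a' \<in> Jid sa m n) \<and>
     (\<forall>a'. bpart sa G C (\<lambda>x v. x * v) (lid sa m) a' \<and> a' \<in> Jid sa m n \<longrightarrow> a' \<in> lid sa m) \<and>
     a0 \<in> \<alpha> m n \<and> bpart sa G C (\<lambda>x v. x * v) (lid sa m) a0 \<and>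
     b0 \<in> \<beta> n l \<and> bpart sa G C (\<lambda>x v. v * x) (rid sa l) b0)"

definition hom_comp :: "('k::field \<Rightarrow> 'a::ring_1 \<Rightarrow> 'a) \<Rightarrow> 'a set \<Rightarrow> 'a set set \<Rightarrow> 'a set set
     \<Rightarrow> 'a set set \<Rightarrow> 'a hom \<Rightarrow> 'a hom \<Rightarrow> 'a hom" where
  "hom_comp sa G B C D \<beta> \<alpha> = (\<lambda>m l. if m \<in> WB sa G B \<and> l \<in> WB sa G D then
      (case SOME t. comp_ok sa G C \<beta> \<alpha> m l t of (n, a0, b0) \<Rightarrow> coset (Jid sa m l) (b0 * a0))
      else {})"

text \<open>A functor F : calA -> Vect_k with each F_{B,C} k-linear.  F(B) is a subspace Fo B of a
  k-vector space 'v, and F_{B,C} alpha is Fm B C alpha (relevant on Fo B only).\<close>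
definition is_Amodule :: "('k::field \<Rightarrow> 'a::ring_1 \<Rightarrow> 'a) \<Rightarrow> 'a set \<Rightarrow> ('a set \<times> 'a set) set
     \<Rightarrow> ('k \<Rightarrow> 'v::ab_group_add \<Rightarrow> 'v) \<Rightarrow> ('a set set \<Rightarrow> 'v set)
     \<Rightarrow> ('a set set \<Rightarrow> 'a set set \<Rightarrow> 'a hom \<Rightarrow> 'v \<Rightarrow> 'v) \<Rightarrow> bool" where
  "is_Amodule sa G R sv Fo Fm \<longleftrightarrow>
     (\<forall>B\<in>objs sa G R. module.subspace sv (Fo B)) \<and>
     (\<forall>B\<in>objs sa G R. \<forall>C\<in>objs sa G R. \<forall>\<alpha>\<in>homset sa G B C.
        (\<forall>v\<in>Fo B. Fm B C \<alpha> v \<in> Fo C) \<and>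
        (\<forall>v\<in>Fo B. \<forall>w\<in>Fo B. Fm B C \<alpha> (v + w) = Fm B C \<alpha> v + Fm B C \<alpha> w) \<and>
        (\<forall>c. \<forall>v\<in>Fo B. Fm B C \<alpha> (sv c v) = sv c (Fm B C \<alpha> v))) \<and>
     (\<forall>B\<in>objs sa G R. \<forall>C\<in>objs sa G R. \<forall>\<alpha>\<in>homset sa G B C. \<forall>\<beta>\<in>homset sa G B C.
        \<forall>v\<in>Fo B. Fm B C (hom_add \<alpha> \<beta>) v = Fm B C \<alpha> v + Fm B C \<beta> v) \<and>
     (\<forall>B\<in>objs sa G R. \<forall>C\<in>objs sa G R. \<forall>\<alpha>\<in>homset sa G B C. \<forall>c.
        \<forall>v\<in>Fo B. Fm B C (hom_scale sa c \<alpha>) v = sv c (Fm B C \<alpha> v)) \<and>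
     (\<forall>B\<in>objs sa G R. \<forall>v\<in>Fo B. Fm B B (hom_of sa G 1 B B) v = v) \<and>
     (\<forall>B\<in>objs sa G R. \<forall>C\<in>objs sa G R. \<forall>D\<in>objs sa G R.
        \<forall>\<alpha>\<in>homset sa G B C. \<forall>\<beta>\<in>homset sa G C D. \<forall>v\<in>Fo B.
        Fm B D (hom_comp sa G B C D \<beta> \<alpha>) v = Fm C D \<beta> (Fm B C \<alpha> v))"

text \<open>profinite: each F_{B,C} continuous from the inverse limit topology on calA(B,C) to the
  limit topology on Hom(F(B),F(C)) (basic neighbourhoods: agreement on a finite-dimensional
  subspace span S, S finite).\<close>
definition profinite_Amodule where
  "profinite_Amodule sa G R sv Fo Fm \<longleftrightarrow> is_Amodule sa G R sv Fo Fm \<and>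
     (\<forall>B\<in>objs sa G R. \<forall>C\<in>objs sa G R. \<forall>\<alpha>\<in>homset sa G B C. \<forall>S.
        finite S \<and> S \<subseteq> Fo B \<longrightarrow>
        (\<exists>I. finite I \<and> I \<subseteq> WB sa G B \<times> WB sa G C \<and>
           (\<forall>\<beta>\<in>homset sa G B C. (\<forall>(m, n)\<in>I. \<beta> m n = \<alpha> m n) \<longrightarrow>
              (\<forall>v\<in>module.span sv S. Fm B C \<beta> v = Fm B C \<alpha> v))))"

text \<open>discrete: each F_{B,C} continuous for the discrete topology on Hom(F(B),F(C)).\<close>
definition discrete_Amodule where
  "discrete_Amodule sa G R sv Fo Fm \<longleftrightarrow> is_Amodule sa G R sv Fo Fm \<and>
     (\<forall>B\<in>objs sa G R. \<forall>C\<in>objs sa G R. \<forall>\<alpha>\<in>homset sa G B C.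
        (\<exists>I. finite I \<and> I \<subseteq> WB sa G B \<times> WB sa G C \<and>
           (\<forall>\<beta>\<in>homset sa G B C. (\<forall>(m, n)\<in>I. \<beta> m n = \<alpha> m n) \<longrightarrow>
              (\<forall>v\<in>Fo B. Fm B C \<beta> v = Fm B C \<alpha> v))))"

definition HF :: "('k::field \<Rightarrow> 'a::ring_1 \<Rightarrow> 'a) \<Rightarrow> 'a set \<Rightarrow> ('a set \<times> 'a set) set
     \<Rightarrow> ('a set set \<Rightarrow> 'v::ab_group_add set) \<Rightarrow> ('a set set \<Rightarrow> 'v) set" where
  "HF sa G R Fo = {h. finite {B. h B \<noteq> 0} \<and>
     (\<forall>B. if B \<in> objs sa G R then h B \<in> Fo B else h B = 0)}"

definition Hact :: "('k::field \<Rightarrow> 'a::ring_1 \<Rightarrow> 'a) \<Rightarrow> 'a set \<Rightarrow> ('a set \<times> 'a set) set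
     \<Rightarrow> ('a set set \<Rightarrow> 'a set set \<Rightarrow> 'a hom \<Rightarrow> 'v::ab_group_add \<Rightarrow> 'v)
     \<Rightarrow> 'a \<Rightarrow> ('a set set \<Rightarrow> 'v) \<Rightarrow> ('a set set \<Rightarrow> 'v)" where
  "Hact sa G R Fm a h = (\<lambda>C. if C \<in> objs sa G R then
      (\<Sum>B\<in>{B. h B \<noteq> 0}. Fm B C (hom_of sa G a B C) (h B)) else 0)"

definition is_left_module :: "('k::field \<Rightarrow> 'a::ring_1 \<Rightarrow> 'a) \<Rightarrow> ('k \<Rightarrow> 'm::ab_group_add \<Rightarrow> 'm)
     \<Rightarrow> 'm set \<Rightarrow> ('a \<Rightarrow> 'm \<Rightarrow> 'm) \<Rightarrow> bool" where
  "is_left_module sa sm M act \<longleftrightarrow> module.subspace sm M \<and>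
     (\<forall>a. \<forall>v\<in>M. act a v \<in> M) \<and> (\<forall>v\<in>M. act 1 v = v) \<and>
     (\<forall>a b. \<forall>v\<in>M. act (a * b) v = act a (act b v)) \<and>
     (\<forall>a b. \<forall>v\<in>M. act (a + b) v = act a v + act b v) \<and>
     (\<forall>a. \<forall>v\<in>M. \<forall>w\<in>M. act a (v + w) = act a v + act a w) \<and>
     (\<forall>c a. \<forall>v\<in>M. act (sa c a) v = sm c (act a v) \<and> act a (sm c v) = sm c (act a v))"

end

theory Submission
  imports Defs
begin

text \<open>
  Two facts about blocks drive the proof. Maximal ideals from different classes are comaximal,
  hence so are \<open>m \<in> W(B)\<close> and \<open>n \<in> W(C)\<close> for \<open>B \<noteq> C\<close>, and therefore \<open>(x) = 0\<close> in \<open>\<A>(B, C)\<close>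
  for \<open>x \<in> \<Gamma>\<close>. Since \<open>A/Am\<close> is a strong block module, \<open>a \<equiv> \<Sum>\<^sub>D a\<^sub>D\<close> modulo \<open>Am\<close> with
  \<open>a\<^sub>D + Am \<in> (A/Am)(D)\<close>, and for \<open>n \<in> W(C)\<close> small enough \<open>a\<^sub>C\<close> is the unique representative
  of \<open>a + nA + Am\<close> in \<open>(A/Am)(C)\<close>; this makes the composition in \<open>\<A>\<close> computable.

  For \<open>v \<in> F(B)\<close>, profiniteness gives \<open>m \<in> W(B)\<close> with \<open>F\<^sub>B\<^sub>,\<^sub>B((x)) v = 0\<close> for \<open>x \<in> m\<close>, and then
  \<open>F\<^sub>B\<^sub>,\<^sub>C((a)) v = F\<^sub>B\<^sub>,\<^sub>C((a\<^sub>C)) v\<close>, which vanishes unless \<open>C\<close> is one of the finitely many blocks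
  occurring in the decomposition of \<open>a\<close>. The composition rule gives
  \<open>F\<^sub>B\<^sub>,\<^sub>D((a b)) v = \<Sum>\<^sub>C F\<^sub>C\<^sub>,\<^sub>D((a)) F\<^sub>B\<^sub>,\<^sub>C((b)) v\<close>, so \<open>\<H>(F)\<close> is an \<open>A\<close>-module. Its block
  components are the summands \<open>F(B)\<close>, and for discrete \<open>F\<close> the ideal \<open>m\<close> can be chosen
  independently of \<open>v\<close>, which makes the block module strong.
\<close>

lemma coset_iff: "x \<in> coset J a \<longleftrightarrow> x - a \<in> J" for J :: "'a::ab_group_add set"
  unfolding coset_def image_iff by (metis add_diff_cancel_left' diff_add_cancel add.commute)

lemma sum_apply: "(sum f S) x = (\<Sum>i\<in>S. f i x)"
  by (induction S rule: infinite_finite_induct) auto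

definition comaximal :: "'a::ring_1 set \<Rightarrow> 'a set \<Rightarrow> bool" where
  "comaximal I J \<longleftrightarrow> (\<exists>u\<in>I. \<exists>w\<in>J. u + w = 1)"

lemma comaximal_sym: "comaximal I J \<Longrightarrow> comaximal J I"
  unfolding comaximal_def by (metis add.commute)

section \<open>Ideals of the subalgebra\<close>

locale hc_block_subalg =
  fixes sa :: "'k::field \<Rightarrow> 'a::ring_1 \<Rightarrow> 'a" and G :: "'a set" and R :: "('a set \<times> 'a set) set"
  assumes kalg: "kalg sa" and subalg: "subalg sa G" and equiv_R: "equiv (cfs sa G) R"
    and strong_HC: "strong_HC_block_subalg sa G R"
begin

sublocale V: vector_space sa
  using kalg unfolding kalg_def by auto

lemma scale_mult_left: "sa c (x * y) = sa c x * y"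
  and scale_mult_right: "sa c (x * y) = x * sa c y"
  using kalg unfolding kalg_def by blast+

lemma G_one: "1 \<in> G" and G_zero: "0 \<in> G" and G_add: "x \<in> G \<Longrightarrow> y \<in> G \<Longrightarrow> x + y \<in> G"
  and G_mult: "x \<in> G \<Longrightarrow> y \<in> G \<Longrightarrow> x * y \<in> G" and G_scale: "x \<in> G \<Longrightarrow> sa c x \<in> G"
  using subalg unfolding subalg_def by auto

lemma span_map_into_subspace:
  assumes "z \<in> V.span X" "V.subspace T" "\<And>s. s \<in> X \<Longrightarrow> f s \<in> T"
    "f 0 = 0" "\<And>x y. f (x + y) = f x + f y" "\<And>c x. f (sa c x) = sa c (f x)"
  shows "f z \<in> T"
proof -
  have "V.subspace {z. f z \<in> T}"
    using assms(2,4,5,6) unfolding V.subspace_def by auto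
  then show ?thesis using V.span_induct[OF assms(1), of "\<lambda>z. f z \<in> T"] assms(3) by auto
qed

lemma tsideal_subspace: "tsideal sa G I \<Longrightarrow> V.subspace I"
  unfolding tsideal_def V.subspace_def by auto

lemma tsideal_subset: "tsideal sa G I \<Longrightarrow> I \<subseteq> G"
  and tsideal_zero: "tsideal sa G I \<Longrightarrow> 0 \<in> I"
  and tsideal_add: "tsideal sa G I \<Longrightarrow> x \<in> I \<Longrightarrow> y \<in> I \<Longrightarrow> x + y \<in> I"
  and tsideal_scale: "tsideal sa G I \<Longrightarrow> x \<in> I \<Longrightarrow> sa c x \<in> I"
  and tsideal_mult_left: "tsideal sa G I \<Longrightarrow> g \<in> G \<Longrightarrow> x \<in> I \<Longrightarrow> g * x \<in> I"
  and tsideal_mult_right: "tsideal sa G I \<Longrightarrow> g \<in> G \<Longrightarrow> x \<in> I \<Longrightarrow> x * g \<in> I"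
  unfolding tsideal_def by auto

lemma tsideal_G: "tsideal sa G G"
  unfolding tsideal_def using G_zero G_add G_scale G_mult by auto

lemma iprod_subset: "tsideal sa G I \<Longrightarrow> tsideal sa G J \<Longrightarrow> iprod sa I J \<subseteq> I"
  unfolding iprod_def
  by (rule V.span_minimal) (auto intro: tsideal_mult_right tsideal_subspace dest: tsideal_subset)

lemma tsideal_iprod:
  assumes I: "tsideal sa G I" and J: "tsideal sa G J"
  shows "tsideal sa G (iprod sa I J)"
proof -
  have "iprod sa I J \<subseteq> G" using iprod_subset[OF I J] tsideal_subset[OF I] by auto
  moreover have "g * z \<in> iprod sa I J" if "g \<in> G" "z \<in> iprod sa I J" for g z
    using that(2) unfolding iprod_def
    apply (rule span_map_into_subspace[where f="\<lambda>z. g * z"])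
    using that(1) tsideal_mult_left[OF I that(1)]
    by (auto simp: mult.assoc[symmetric] distrib_left scale_mult_right[symmetric] intro!: V.span_base) blast
  moreover have "z * g \<in> iprod sa I J" if "g \<in> G" "z \<in> iprod sa I J" for g z
    using that(2) unfolding iprod_def
    apply (rule span_map_into_subspace[where f="\<lambda>z. z * g"])
    using that(1) tsideal_mult_right[OF J that(1)]
    by (auto simp: mult.assoc distrib_right scale_mult_left[symmetric] intro!: V.span_base) blast
  ultimately show ?thesis unfolding tsideal_def
    by (auto simp: iprod_def V.span_zero V.span_add V.span_scale)
qed

lemma objs_subset_cfs: "B \<in> objs sa G R \<Longrightarrow> B \<subseteq> cfs sa G"
  unfolding objs_def using equiv_R in_quotient_imp_subset by blast

lemma cfs_tsideal: "p \<in> cfs sa G \<Longrightarrow> tsideal sa G p"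
  unfolding cfs_def by auto

lemma WB_tsideal: "m \<in> WB sa G B \<Longrightarrow> B \<in> objs sa G R \<Longrightarrow> tsideal sa G m"
  by (induction m rule: WB.induct)
    (auto intro: tsideal_G tsideal_iprod cfs_tsideal dest: objs_subset_cfs)

lemma WB_subset: "m \<in> WB sa G B \<Longrightarrow> B \<in> objs sa G R \<Longrightarrow> m \<subseteq> G"
  using WB_tsideal tsideal_subset by blast

lemma WB_lower_bound:
  assumes m1: "m1 \<in> WB sa G B" and m2: "m2 \<in> WB sa G B" and B: "B \<in> objs sa G R"
  obtains m where "m \<in> WB sa G B" "m \<subseteq> m1" "m \<subseteq> m2"
proof -
  from m2 have "\<exists>m\<in>WB sa G B. m \<subseteq> m1 \<and> m \<subseteq> m2"
  proof (induction m2 rule: WB.induct)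
    case WB_one
    then show ?case using WB_subset m1 B by blast
  next
    case (WB_mult m2 p)
    then obtain m where m: "m \<in> WB sa G B" "m \<subseteq> m1" "m \<subseteq> m2" by auto
    have "iprod sa m p \<in> WB sa G B" using m WB_mult by (auto intro: WB.WB_mult)
    moreover have "iprod sa m p \<subseteq> m"
      using iprod_subset WB_tsideal[OF m(1) B] WB_mult objs_subset_cfs[OF B] cfs_tsideal by blast
    moreover have "iprod sa m p \<subseteq> iprod sa m2 p"
      unfolding iprod_def using m by (intro V.span_mono) blast
    ultimately show ?case using m by blast
  qed
  then show ?thesis using that by blast
qed

lemma WB_lower_bound_finite:
  assumes "finite X" "X \<subseteq> WB sa G B" "B \<in> objs sa G R"
  obtains m where "m \<in> WB sa G B" "\<forall>x\<in>X. m \<subseteq> x"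
proof -
  from assms have "\<exists>m\<in>WB sa G B. \<forall>x\<in>X. m \<subseteq> x"
  proof (induction X rule: finite_induct)
    case empty
    then show ?case by (auto intro: WB.WB_one)
  next
    case (insert x X)
    have "X \<subseteq> WB sa G B" "x \<in> WB sa G B" using insert.prems(1) by simp_all
    then obtain m where m: "m \<in> WB sa G B" "\<forall>y\<in>X. m \<subseteq> y"
      using insert.IH insert.prems(2) by blast
    obtain m' where m': "m' \<in> WB sa G B" "m' \<subseteq> m" "m' \<subseteq> x"
      by (rule WB_lower_bound[OF m(1) \<open>x \<in> WB sa G B\<close> insert.prems(2)])
    have "\<forall>y\<in>insert x X. m' \<subseteq> y" using m(2) m'(2,3) by blast
    with m'(1) show ?case by blast
  qed
  then show ?thesis using that by blast
qed

lemma tsideal_sum: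
  assumes I: "tsideal sa G I" and J: "tsideal sa G J"
  shows "tsideal sa G {u + w | u w. u \<in> I \<and> w \<in> J}"
  unfolding tsideal_def
proof (intro conjI ballI allI)
  show "{u + w | u w. u \<in> I \<and> w \<in> J} \<subseteq> G"
    using I J tsideal_subset G_add by blast
  show "0 \<in> {u + w | u w. u \<in> I \<and> w \<in> J}"
    using tsideal_zero[OF I] tsideal_zero[OF J] by force
next
  fix x y assume "x \<in> {u + w | u w. u \<in> I \<and> w \<in> J}" "y \<in> {u + w | u w. u \<in> I \<and> w \<in> J}"
  then obtain u w u' w' where "x = u + w" "y = u' + w'" "u \<in> I" "w \<in> J" "u' \<in> I" "w' \<in> J"
    by blast
  moreover have "x + y = (u + u') + (w + w')" using calculation by (simp add: algebra_simps)
  ultimately show "x + y \<in> {u + w | u w. u \<in> I \<and> w \<in> J}"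
    using tsideal_add[OF I] tsideal_add[OF J] by blast
next
  fix c x assume "x \<in> {u + w | u w. u \<in> I \<and> w \<in> J}"
  then obtain u w where "x = u + w" "u \<in> I" "w \<in> J" by blast
  then have "sa c x = sa c u + sa c w" "sa c u \<in> I" "sa c w \<in> J"
    using tsideal_scale[OF I] tsideal_scale[OF J] by (auto simp: V.scale_right_distrib)
  then show "sa c x \<in> {u + w | u w. u \<in> I \<and> w \<in> J}" by blast
next
  fix g x assume g: "g \<in> G" and "x \<in> {u + w | u w. u \<in> I \<and> w \<in> J}"
  then obtain u w where uw: "x = u + w" "u \<in> I" "w \<in> J" by blast
  have "g * x = g * u + g * w" "x * g = u * g + w * g"
    using uw(1) by (simp_all add: algebra_simps)
  moreover have "g * u \<in> I" "u * g \<in> I" "g * w \<in> J" "w * g \<in> J"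
    using g uw I J tsideal_mult_left tsideal_mult_right by auto
  ultimately show "g * x \<in> {u + w | u w. u \<in> I \<and> w \<in> J}"
    and "x * g \<in> {u + w | u w. u \<in> I \<and> w \<in> J}" by blast+
qed

lemma cfs_comaximal:
  assumes p: "p \<in> cfs sa G" and q: "q \<in> cfs sa G" and ne: "p \<noteq> q"
  shows "comaximal p q"
proof -
  have tp: "tsideal sa G p" and tq: "tsideal sa G q" using p q cfs_tsideal by auto
  define I where "I = {u + w | u w. u \<in> p \<and> w \<in> q}"
  have I: "tsideal sa G I" unfolding I_def using tp tq by (rule tsideal_sum)
  have "p \<subseteq> I" "q \<subseteq> I" unfolding I_def using tsideal_zero[OF tp] tsideal_zero[OF tq] by force+
  have "I = G"
  proof (rule ccontr)
    assume "I \<noteq> G"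
    then have "I = p" using p I \<open>p \<subseteq> I\<close> unfolding cfs_def by blast
    then have "p = q" using p q tp \<open>q \<subseteq> I\<close> unfolding cfs_def by blast
    then show False using ne by simp
  qed
  then have "1 \<in> I" using G_one by simp
  then obtain u w where "1 = u + w" "u \<in> p" "w \<in> q" unfolding I_def by blast
  then show ?thesis unfolding comaximal_def by metis
qed

lemma comaximal_iprod:
  assumes I: "tsideal sa G I" and J: "tsideal sa G J" and J': "tsideal sa G J'"
    and "comaximal I J" and "comaximal I J'"
  shows "comaximal I (iprod sa J J')"
proof -
  obtain u w where uw: "u \<in> I" "w \<in> J" "u + w = 1"
    using \<open>comaximal I J\<close> unfolding comaximal_def by auto
  obtain u' w' where uw': "u' \<in> I" "w' \<in> J'" "u' + w' = 1"
    using \<open>comaximal I J'\<close> unfolding comaximal_def by auto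
  have "(u * u' + u * w' + w * u') + w * w' = (u + w) * (u' + w')"
    by (simp add: algebra_simps)
  also have "\<dots> = 1" using uw uw' by simp
  finally have eq: "(u * u' + u * w' + w * u') + w * w' = 1" .
  have "u * u' \<in> I" "u * w' \<in> I"
    using uw uw' tsideal_subset[OF I] tsideal_subset[OF J'] tsideal_mult_right[OF I] by auto
  moreover have "w * u' \<in> I"
    using uw uw' tsideal_subset[OF J] tsideal_mult_left[OF I] by auto
  ultimately have "u * u' + u * w' + w * u' \<in> I" using tsideal_add[OF I] by blast
  moreover have "w * w' \<in> iprod sa J J'"
    unfolding iprod_def using uw uw' by (auto intro!: V.span_base)
  ultimately show ?thesis unfolding comaximal_def using eq by blast
qed

lemma WB_comaximal:
  assumes B: "B \<in> objs sa G R" and C: "C \<in> objs sa G R" and ne: "B \<noteq> C"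
    and m: "m \<in> WB sa G B" and n: "n \<in> WB sa G C"
  shows "comaximal m n"
proof -
  have disjoint: "B \<inter> C = {}"
    using quotient_disj[OF equiv_R, of B C] B C ne unfolding objs_def by auto
  have tsideal_n: "tsideal sa G n" using WB_tsideal n C by blast
  have prime_comaximal: "comaximal p n" if p: "p \<in> B" for p
    using n
  proof (induction n rule: WB.induct)
    case WB_one
    have "0 \<in> p" using tsideal_zero cfs_tsideal objs_subset_cfs B p by blast
    then show ?case unfolding comaximal_def using G_one by force
  next
    case (WB_mult n q)
    have "p \<in> cfs sa G" "q \<in> cfs sa G" "p \<noteq> q"
      using objs_subset_cfs B C p WB_mult(2) disjoint by auto
    then have "comaximal p q" by (rule cfs_comaximal)
    moreover have "tsideal sa G p" "tsideal sa G q" "tsideal sa G n"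
      using \<open>p \<in> cfs sa G\<close> \<open>q \<in> cfs sa G\<close> cfs_tsideal WB_tsideal[OF WB_mult(1) C] by auto
    ultimately show ?case using comaximal_iprod WB_mult(3) by blast
  qed
  from m show ?thesis
  proof (induction m rule: WB.induct)
    case WB_one
    have "0 \<in> n" using tsideal_zero tsideal_n by blast
    then show ?case unfolding comaximal_def using G_one by force
  next
    case (WB_mult m p)
    have "tsideal sa G m" "tsideal sa G p"
      using WB_tsideal[OF WB_mult(1) B] cfs_tsideal objs_subset_cfs B WB_mult(2) by auto
    moreover have "comaximal n m" "comaximal n p"
      using WB_mult(3) prime_comaximal[OF WB_mult(2)] comaximal_sym by auto
    ultimately have "comaximal n (iprod sa m p)" using comaximal_iprod[OF tsideal_n] by blast
    then show ?case by (rule comaximal_sym)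
  qed
qed

end

section \<open>Morphisms of the category\<close>

context hc_block_subalg
begin

lemma Jid_eq_span:
  "Jid sa m n = V.span ({x * y | x y. x \<in> n \<and> y \<in> UNIV} \<union> {x * y | x y. x \<in> UNIV \<and> y \<in> m})"
  unfolding Jid_def rid_def lid_def iprod_def V.span_Un by simp

lemma Jid_subspace: "V.subspace (Jid sa m n)"
  unfolding Jid_eq_span by simp

lemma lid_subset_Jid: "lid sa m \<subseteq> Jid sa m n"
  unfolding Jid_eq_span lid_def iprod_def by (intro V.span_mono) blast

lemma rid_subset_Jid: "rid sa n \<subseteq> Jid sa m n"
  unfolding Jid_eq_span rid_def iprod_def by (intro V.span_mono) blast

lemma Jid_mono: "m \<subseteq> m' \<Longrightarrow> n \<subseteq> n' \<Longrightarrow> Jid sa m n \<subseteq> Jid sa m' n'"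
  unfolding Jid_eq_span by (intro V.span_mono) blast

lemma mem_lid:
  assumes "x \<in> m" shows "x \<in> lid sa m"
proof -
  have "1 * x \<in> {x * y | x y. x \<in> UNIV \<and> y \<in> m}"
    using assms by (intro CollectI exI[of _ 1] exI[of _ x]) simp
  then have "1 * x \<in> lid sa m" unfolding lid_def iprod_def by (rule V.span_base)
  then show ?thesis by simp
qed

lemma mem_rid:
  assumes "x \<in> n" shows "x \<in> rid sa n"
proof -
  have "x * 1 \<in> {x * y | x y. x \<in> n \<and> y \<in> UNIV}"
    using assms by (intro CollectI exI[of _ x] exI[of _ 1]) simp
  then have "x * 1 \<in> rid sa n" unfolding rid_def iprod_def by (rule V.span_base)
  then show ?thesis by simp
qed

lemma coset_self: "V.subspace J \<Longrightarrow> a \<in> coset J a"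
  using V.subspace_0 by (simp add: coset_iff)

lemma coset_mono: "J \<subseteq> J' \<Longrightarrow> coset J a \<subseteq> coset J' a"
  by (auto simp: coset_iff)

lemma coset_eq_iff:
  assumes J: "V.subspace J"
  shows "coset J a = coset J b \<longleftrightarrow> a - b \<in> J"
proof
  assume eq: "coset J a = coset J b"
  have "a \<in> coset J b" using coset_self[OF J, of a] eq by simp
  then show "a - b \<in> J" by (simp only: coset_iff)
next
  assume d: "a - b \<in> J"
  show "coset J a = coset J b"
  proof (rule set_eqI)
    fix x
    have "x - a \<in> J \<longleftrightarrow> x - b \<in> J"
    proof
      assume "x - a \<in> J"
      then have "(x - a) + (a - b) \<in> J" using d V.subspace_add[OF J] by blast
      then show "x - b \<in> J" by simp
    next
      assume "x - b \<in> J"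
      then have "(x - b) - (a - b) \<in> J" using d V.subspace_diff[OF J] by blast
      then show "x - a \<in> J" by simp
    qed
    then show "x \<in> coset J a \<longleftrightarrow> x \<in> coset J b" by (simp add: coset_iff)
  qed
qed

lemma coset_rebase: "p \<in> coset (Jid sa m n) a \<Longrightarrow> coset (Jid sa m n) a = coset (Jid sa m n) p"
  using coset_eq_iff[OF Jid_subspace] V.subspace_neg[OF Jid_subspace]
  by (simp add: coset_iff) (metis minus_diff_eq)

lemma homset_coset:
  "\<alpha> \<in> homset sa G B C \<Longrightarrow> m \<in> WB sa G B \<Longrightarrow> n \<in> WB sa G C \<Longrightarrow> \<exists>a. \<alpha> m n = coset (Jid sa m n) a"
  unfolding homset_def by auto

lemma homset_mono:
  "\<alpha> \<in> homset sa G B C \<Longrightarrow> m \<in> WB sa G B \<Longrightarrow> m' \<in> WB sa G B \<Longrightarrow> n \<in> WB sa G C \<Longrightarrow>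
    n' \<in> WB sa G C \<Longrightarrow> m \<subseteq> m' \<Longrightarrow> n \<subseteq> n' \<Longrightarrow> \<alpha> m n \<subseteq> \<alpha> m' n'"
  unfolding homset_def by auto

lemma hom_of_apply:
  "m \<in> WB sa G B \<Longrightarrow> n \<in> WB sa G C \<Longrightarrow> hom_of sa G a B C m n = coset (Jid sa m n) a"
  unfolding hom_of_def by simp

lemma hom_of_outside:
  "\<not> (m \<in> WB sa G B \<and> n \<in> WB sa G C) \<Longrightarrow> hom_of sa G a B C m n = {}"
  unfolding hom_of_def by auto

lemma hom_of_in_homset: "hom_of sa G a B C \<in> homset sa G B C"
  unfolding homset_def
proof (intro CollectI conjI allI impI)
  fix m m' n n'
  assume "m \<in> WB sa G B \<and> m' \<in> WB sa G B \<and> n \<in> WB sa G C \<and> n' \<in> WB sa G C \<and> m \<subseteq> m' \<and> n \<subseteq> n'"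
  then show "hom_of sa G a B C m n \<subseteq> hom_of sa G a B C m' n'"
    using hom_of_apply coset_mono[OF Jid_mono] by metis
qed (auto simp: hom_of_def)

lemma hom_of_eqI:
  assumes "\<And>m n. m \<in> WB sa G B \<Longrightarrow> n \<in> WB sa G C \<Longrightarrow> a - b \<in> Jid sa m n"
  shows "hom_of sa G a B C = hom_of sa G b B C"
proof (intro ext)
  fix m n
  show "hom_of sa G a B C m n = hom_of sa G b B C m n"
    using assms[of m n] coset_eq_iff[OF Jid_subspace] by (simp add: hom_of_def)
qed

lemma coset_add:
  assumes J: "V.subspace J"
  shows "{x + y |x y. x \<in> coset J a \<and> y \<in> coset J b} = coset J (a + b)"
proof (intro set_eqI iffI)
  fix z assume "z \<in> {x + y |x y. x \<in> coset J a \<and> y \<in> coset J b}"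
  then obtain x y where "z = x + y" "x - a \<in> J" "y - b \<in> J" by (auto simp: coset_iff)
  moreover have e: "z - (a + b) = (x - a) + (y - b)" using calculation by (simp add: algebra_simps)
  ultimately have "z - (a + b) \<in> J" unfolding e using V.subspace_add[OF J] by blast
  then show "z \<in> coset J (a + b)" by (simp add: coset_iff)
next
  fix z assume "z \<in> coset J (a + b)"
  then have "z - b \<in> coset J a" "b \<in> coset J b"
    using coset_self[OF J] by (simp_all add: coset_iff algebra_simps)
  moreover have "z = (z - b) + b" by simp
  ultimately show "z \<in> {x + y |x y. x \<in> coset J a \<and> y \<in> coset J b}" by blast
qed

lemma hom_add_hom_of: "hom_add (hom_of sa G a B C) (hom_of sa G b B C) = hom_of sa G (a + b) B C"
proof (intro ext)
  fix m n
  show "hom_add (hom_of sa G a B C) (hom_of sa G b B C) m n = hom_of sa G (a + b) B C m n"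
  proof (cases "m \<in> WB sa G B \<and> n \<in> WB sa G C")
    case True
    then show ?thesis unfolding hom_add_def hom_of_def by (simp add: coset_add[OF Jid_subspace])
  qed (simp add: hom_add_def hom_of_outside)
qed

lemma hom_scale_hom_of: "hom_scale sa c (hom_of sa G a B C) = hom_of sa G (sa c a) B C"
proof (intro ext)
  fix m n
  let ?J = "Jid sa m n"
  have "(SOME x. x \<in> coset ?J a) \<in> coset ?J a"
    using coset_self[OF Jid_subspace] by (rule someI)
  then have "sa c ((SOME x. x \<in> coset ?J a) - a) \<in> ?J"
    using V.subspace_scale[OF Jid_subspace] by (simp add: coset_iff)
  then have "coset ?J (sa c (SOME x. x \<in> coset ?J a)) = coset ?J (sa c a)"
    using coset_eq_iff[OF Jid_subspace] by (simp add: V.scale_right_diff_distrib)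
  moreover have "coset ?J a \<noteq> {}" using coset_self[OF Jid_subspace] by auto
  ultimately show "hom_scale sa c (hom_of sa G a B C) m n = hom_of sa G (sa c a) B C m n"
    unfolding hom_scale_def hom_of_def by simp
qed

lemma hom_of_offdiag:
  assumes B: "B \<in> objs sa G R" and C: "C \<in> objs sa G R" and "B \<noteq> C" and x: "x \<in> G"
  shows "hom_of sa G x B C = hom_of sa G 0 B C"
proof (rule hom_of_eqI)
  fix m n assume m: "m \<in> WB sa G B" and n: "n \<in> WB sa G C"
  obtain u w where uw: "u \<in> m" "w \<in> n" "u + w = 1"
    using WB_comaximal[OF B C \<open>B \<noteq> C\<close> m n] unfolding comaximal_def by auto
  have "w * x \<in> rid sa n" unfolding rid_def iprod_def using uw by (intro V.span_base) blast
  moreover have "u * x \<in> lid sa m" using mem_lid tsideal_mult_right[OF WB_tsideal[OF m B] x uw(1)] .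
  ultimately have "w * x + u * x \<in> Jid sa m n" unfolding Jid_def by blast
  moreover have "w * x + u * x = x" using uw(3) by (simp add: distrib_right[symmetric] add.commute)
  ultimately show "x - 0 \<in> Jid sa m n" by simp
qed

end

section \<open>Block decompositions of \<open>A/Am\<close> and \<open>A/mA\<close>\<close>

text \<open>For \<open>mul = (*)\<close> the quotient \<open>A/lideal m\<close> is the left module \<open>A/Am\<close>; for the opposite
  multiplication it is the right module \<open>A/mA\<close>.\<close>

locale hc_side = hc_block_subalg sa G R for sa :: "'k::field \<Rightarrow> 'a::ring_1 \<Rightarrow> 'a" and G R +
  fixes mul :: "'a \<Rightarrow> 'a \<Rightarrow> 'a"
  assumes mul_assoc: "mul (mul x y) z = mul x (mul y z)"
    and mul_1_left: "mul 1 x = x"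
    and mul_distrib_left: "mul x (y + z) = mul x y + mul x z"
    and mul_distrib_right: "mul (x + y) z = mul x z + mul y z"
    and mul_scale_left: "mul (sa c x) y = sa c (mul x y)"
    and mul_scale_right: "mul x (sa c y) = sa c (mul x y)"
    and mul_tsideal: "tsideal sa G I \<Longrightarrow> g \<in> G \<Longrightarrow> x \<in> I \<Longrightarrow> mul g x \<in> I \<and> mul x g \<in> I"
    and strong_block: "B \<in> objs sa G R \<Longrightarrow> m \<in> WB sa G B \<Longrightarrow>
      strong_block_module sa G R UNIV (V.span {mul z x | z x. x \<in> m}) mul"
begin

definition lideal :: "'a set \<Rightarrow> 'a set" where
  "lideal m = V.span {mul z x | z x. x \<in> m}"

definition rideal :: "'a set \<Rightarrow> 'a set" where
  "rideal n = V.span {mul x z | x z. x \<in> n}"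

definition jideal :: "'a set \<Rightarrow> 'a set \<Rightarrow> 'a set" where
  "jideal m n = V.span ({mul z x | z x. x \<in> m} \<union> {mul x z | x z. x \<in> n})"

abbreviation in_block :: "'a set set \<Rightarrow> 'a set \<Rightarrow> 'a \<Rightarrow> bool" where
  "in_block C m v \<equiv> bpart sa G C mul (lideal m) v"

text \<open>The natural map \<open>(A/Am)(C) \<rightarrow> A/(nA + Am)\<close> is injective.\<close>

definition injective_at :: "'a set set \<Rightarrow> 'a set \<Rightarrow> 'a set \<Rightarrow> bool" where
  "injective_at C m n \<longleftrightarrow> (\<forall>a. in_block C m a \<and> a \<in> jideal m n \<longrightarrow> a \<in> lideal m)"

definition component :: "('b \<Rightarrow> 'a) \<Rightarrow> 'b set \<Rightarrow> 'b \<Rightarrow> 'a" where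
  "component f S D = (if D \<in> S then f D else 0)"

lemma jideal_eq: "jideal m n = {x + y | x y. x \<in> lideal m \<and> y \<in> rideal n}"
  unfolding jideal_def lideal_def rideal_def V.span_Un by simp

lemma mul_0_left: "mul 0 x = 0"
  using mul_scale_left[of 0 0 x] by simp

lemma mul_0_right: "mul x 0 = 0"
  using mul_scale_right[of x 0 0] by simp

lemma mul_diff_right: "mul x (y - z) = mul x y - mul x z"
  using mul_distrib_left[of x "y - z" z] by (simp add: algebra_simps)

lemma mul_sum_right: "mul x (sum f S) = (\<Sum>i\<in>S. mul x (f i))"
  by (induction S rule: infinite_finite_induct) (auto simp: mul_distrib_left mul_0_right)

lemma lideal_subspace [simp]: "V.subspace (lideal m)"
  and jideal_subspace [simp]: "V.subspace (jideal m n)"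
  unfolding lideal_def jideal_def by simp_all

lemma mul_mem_lideal: "x \<in> m \<Longrightarrow> mul z x \<in> lideal m"
  unfolding lideal_def by (rule V.span_base) blast

lemma mul_mem_rideal: "x \<in> n \<Longrightarrow> mul x z \<in> rideal n"
  unfolding rideal_def by (rule V.span_base) blast

lemma lideal_subset_jideal: "lideal m \<subseteq> jideal m n"
  unfolding lideal_def jideal_def by (rule V.span_mono) blast

lemma rideal_subset_jideal: "rideal n \<subseteq> jideal m n"
  unfolding rideal_def jideal_def by (rule V.span_mono) blast

lemma lideal_mono: "m \<subseteq> m' \<Longrightarrow> lideal m \<subseteq> lideal m'"
  unfolding lideal_def by (rule V.span_mono) blast

lemma lideal_mul: "w \<in> lideal m \<Longrightarrow> mul z w \<in> lideal m"
  unfolding lideal_def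
  by (rule span_map_into_subspace[where f="mul z"])
    (auto simp: mul_0_right mul_distrib_left mul_scale_right mul_assoc[symmetric] intro: mul_mem_lideal[unfolded lideal_def])

lemma in_block_mono: "lideal m \<subseteq> lideal m' \<Longrightarrow> in_block C m v \<Longrightarrow> in_block C m' v"
  unfolding bpart_def by blast

lemma in_block_zero: "in_block C m 0"
  unfolding bpart_def using WB.WB_one mul_0_right V.subspace_0[OF lideal_subspace] by metis

lemma in_block_add:
  assumes C: "C \<in> objs sa G R" and "in_block C m v" and "in_block C m w"
  shows "in_block C m (v + w)"
proof -
  obtain k1 where k1: "k1 \<in> WB sa G C" "\<forall>x\<in>k1. mul x v \<in> lideal m"
    using \<open>in_block C m v\<close> unfolding bpart_def by blast
  obtain k2 where k2: "k2 \<in> WB sa G C" "\<forall>x\<in>k2. mul x w \<in> lideal m"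
    using \<open>in_block C m w\<close> unfolding bpart_def by blast
  obtain k where k: "k \<in> WB sa G C" "k \<subseteq> k1" "k \<subseteq> k2"
    by (rule WB_lower_bound[OF k1(1) k2(1) C])
  have "mul x (v + w) \<in> lideal m" if "x \<in> k" for x
  proof -
    have "mul x v \<in> lideal m" "mul x w \<in> lideal m" using that k k1(2) k2(2) by blast+
    then show ?thesis using V.subspace_add[OF lideal_subspace] by (simp add: mul_distrib_left)
  qed
  then show ?thesis unfolding bpart_def using k(1) by blast
qed

lemma in_block_scale: "in_block C m v \<Longrightarrow> in_block C m (sa c v)"
  unfolding bpart_def by (auto simp: mul_scale_right intro: V.subspace_scale[OF lideal_subspace])

lemma in_block_neg: "in_block C m v \<Longrightarrow> in_block C m (- v)"
  using in_block_scale[of C m v "-1"] by simp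

lemma in_block_diff: "C \<in> objs sa G R \<Longrightarrow> in_block C m v \<Longrightarrow> in_block C m w \<Longrightarrow> in_block C m (v - w)"
  using in_block_add[of C m v "- w"] in_block_neg by simp

lemma in_block_mul:
  assumes C: "C \<in> objs sa G R" and g: "g \<in> G" and v: "in_block C m v"
  shows "in_block C m (mul g v)"
proof -
  obtain k where k: "k \<in> WB sa G C" "\<forall>x\<in>k. mul x v \<in> lideal m"
    using v unfolding bpart_def by blast
  have "mul x (mul g v) \<in> lideal m" if "x \<in> k" for x
    using k(2) mul_tsideal[OF WB_tsideal[OF k(1) C] g that] by (simp add: mul_assoc[symmetric])
  then show ?thesis unfolding bpart_def using k(1) by blast
qed

lemma in_block_component: "\<forall>D\<in>S. in_block D m (f D) \<Longrightarrow> in_block C m (component f S C)"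
  unfolding component_def using in_block_zero by auto

lemma sum_split_component: "finite S \<Longrightarrow> sum f S = component f S C + sum f (S - {C})"
  unfolding component_def by (auto simp: sum.remove)

lemma sum_component: "finite T \<Longrightarrow> S \<subseteq> T \<Longrightarrow> sum (component f S) T = sum f S"
  unfolding component_def by (simp add: sum.inter_restrict[symmetric] Int_absorb1)

context
  fixes B0 m
  assumes B0: "B0 \<in> objs sa G R" and m: "m \<in> WB sa G B0"
begin

lemma strong_block_lideal: "strong_block_module sa G R UNIV (lideal m) mul"
  using strong_block[OF B0 m] unfolding lideal_def .

lemma block_decomposition:
  obtains S f where "finite S" "S \<subseteq> objs sa G R" "\<forall>D\<in>S. in_block D m (f D)" "a - sum f S \<in> lideal m"
proof -
  have "\<forall>v\<in>UNIV. \<exists>S f. finite S \<and> S \<subseteq> objs sa G R \<and>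
      (\<forall>B\<in>S. f B \<in> UNIV \<and> in_block B m (f B)) \<and> v - sum f S \<in> lideal m"
    using strong_block_lideal unfolding strong_block_module_def block_module_def
    by (rule conjunct1[OF conjunct1])
  from bspec[OF this UNIV_I, of a] show ?thesis using that by blast
qed

lemma block_sum_in_lideal:
  assumes "finite S" "S \<subseteq> objs sa G R" "\<forall>D\<in>S. in_block D m (f D)" "sum f S \<in> lideal m" "D \<in> S"
  shows "f D \<in> lideal m"
proof -
  have "\<forall>S f. finite S \<and> S \<subseteq> objs sa G R \<and> (\<forall>B\<in>S. f B \<in> UNIV \<and> in_block B m (f B)) \<and>
      sum f S \<in> lideal m \<longrightarrow> (\<forall>B\<in>S. f B \<in> lideal m)"
    using strong_block_lideal unfolding strong_block_module_def block_module_def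
    by (rule conjunct2[OF conjunct1])
  then show ?thesis using assms by simp
qed

lemma block_uniformly_killed:
  assumes C: "C \<in> objs sa G R"
  obtains k where "k \<in> WB sa G C" "\<And>v x. in_block C m v \<Longrightarrow> x \<in> k \<Longrightarrow> mul x v \<in> lideal m"
proof -
  have "\<forall>C\<in>objs sa G R. \<exists>k\<in>WB sa G C. \<forall>v\<in>UNIV. in_block C m v \<longrightarrow> (\<forall>x\<in>k. mul x v \<in> lideal m)"
    using strong_block_lideal unfolding strong_block_module_def by (rule conjunct2)
  from bspec[OF this C] show ?thesis using that by blast
qed

end

end

context hc_side
begin

lemma mul_other_block_in_jideal:
  assumes D: "D \<in> objs sa G R" and C: "C \<in> objs sa G R" and "D \<noteq> C"
    and v: "in_block D m v" and g: "g \<in> G" and n: "n \<in> WB sa G C"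
  shows "mul g v \<in> jideal m n"
proof -
  obtain q where q: "q \<in> WB sa G D" "\<forall>x\<in>q. mul x v \<in> lideal m"
    using v unfolding bpart_def by blast
  obtain u w where uw: "u \<in> q" "w \<in> n" "u + w = 1"
    using WB_comaximal[OF D C \<open>D \<noteq> C\<close> q(1) n] unfolding comaximal_def by blast
  have "mul u g \<in> q" using mul_tsideal[OF WB_tsideal[OF q(1) D] g uw(1)] by blast
  then have "mul (mul u g) v \<in> jideal m n" using q(2) lideal_subset_jideal by blast
  moreover have "mul w g \<in> n" using mul_tsideal[OF WB_tsideal[OF n C] g uw(2)] by blast
  then have "mul (mul w g) v \<in> jideal m n" using mul_mem_rideal rideal_subset_jideal by blast
  moreover have "mul g v = mul (mul u g) v + mul (mul w g) v"
    using uw(3) mul_distrib_right[of u w g] mul_distrib_right[of "mul u g" "mul w g" v] mul_1_left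
    by simp
  ultimately show ?thesis using V.subspace_add[OF jideal_subspace] by metis
qed

lemma other_block_in_jideal:
  "D \<in> objs sa G R \<Longrightarrow> C \<in> objs sa G R \<Longrightarrow> D \<noteq> C \<Longrightarrow> in_block D m v \<Longrightarrow> n \<in> WB sa G C \<Longrightarrow>
    v \<in> jideal m n"
  using mul_other_block_in_jideal[OF _ _ _ _ G_one] mul_1_left by metis

lemma sum_other_blocks_in_jideal:
  assumes "C \<in> objs sa G R" "n \<in> WB sa G C" "S \<subseteq> objs sa G R" "\<forall>D\<in>S. in_block D m (f D)"
  shows "sum f (S - {C}) \<in> jideal m n"
  using assms other_block_in_jideal by (intro V.subspace_sum[OF jideal_subspace]) blast

lemma representative_component:
  assumes C: "C \<in> objs sa G R" and n: "n \<in> WB sa G C" and inj: "injective_at C m n"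
    and S: "finite S" "S \<subseteq> objs sa G R" "\<forall>D\<in>S. in_block D m (f D)" "a - sum f S \<in> lideal m"
    and a': "in_block C m a'" "a - a' \<in> jideal m n"
  shows "a' - component f S C \<in> lideal m"
proof -
  have "a' - component f S C = - (a - a') + (a - sum f S) + sum f (S - {C})"
    using sum_split_component[OF S(1), of f C] by (simp add: algebra_simps)
  moreover have "- (a - a') \<in> jideal m n" using a'(2) V.subspace_neg[OF jideal_subspace] by blast
  moreover have "a - sum f S \<in> jideal m n" using S(4) lideal_subset_jideal by blast
  moreover have "sum f (S - {C}) \<in> jideal m n"
    using sum_other_blocks_in_jideal[OF C n S(2,3)] .
  ultimately have "a' - component f S C \<in> jideal m n"
    using V.subspace_add[OF jideal_subspace] by metis
  moreover have "in_block C m (a' - component f S C)"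
    using in_block_diff[OF C a'(1) in_block_component[OF S(3)]] .
  ultimately show ?thesis using inj unfolding injective_at_def by blast
qed

lemma lideal_mul_in_block:
  assumes C: "C \<in> objs sa G R" and n: "n \<in> WB sa G C" and inj: "injective_at C m n"
    and a': "in_block C m a'" and w: "w \<in> lideal n"
  shows "mul w a' \<in> lideal m"
  using w unfolding lideal_def[of n]
proof (rule span_map_into_subspace[where f="\<lambda>w. mul w a'"])
  fix s assume "s \<in> {mul z x |z x. x \<in> n}"
  then obtain z x where s: "s = mul z x" "x \<in> n" by blast
  have "x \<in> G" using WB_subset[OF n C] s(2) by blast
  then have "in_block C m (mul x a')" using in_block_mul[OF C _ a'] by blast
  moreover have "mul x a' \<in> jideal m n" using mul_mem_rideal[OF s(2)] rideal_subset_jideal by blast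
  ultimately have "mul x a' \<in> lideal m" using inj unfolding injective_at_def by blast
  then show "mul s a' \<in> lideal m" using s lideal_mul by (simp add: mul_assoc)
qed (auto simp: mul_0_left mul_distrib_right mul_scale_left)

context
  fixes B0 m
  assumes B0: "B0 \<in> objs sa G R" and m: "m \<in> WB sa G B0"
begin

lemma component_eq_block_element:
  assumes S: "finite S" "S \<subseteq> objs sa G R" "\<forall>D\<in>S. in_block D m (f D)"
    and E: "E \<in> objs sa G R" "in_block E m e" and d: "sum f S - e \<in> lideal m"
  shows "component f S E - e \<in> lideal m"
proof -
  let ?h = "\<lambda>D. component f S D - (if D = E then e else 0)"
  have T: "finite (insert E S)" "insert E S \<subseteq> objs sa G R" using S E by auto
  have "sum ?h (insert E S) = sum f S - e"
    using sum_component[OF T(1) subset_insertI, of f] T(1) by (simp add: sum_subtractf)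
  moreover have "\<forall>D\<in>insert E S. in_block D m (?h D)"
    using T(2) in_block_diff in_block_component[OF S(3)] E(2) in_block_zero by simp
  ultimately have "?h E \<in> lideal m"
    using block_sum_in_lideal[OF B0 m T, of ?h E] d by simp
  then show ?thesis by simp
qed

lemma mul_representative:
  assumes C: "C \<in> objs sa G R" and n: "n \<in> WB sa G C" and inj: "injective_at C m n"
    and a': "in_block C m a'" "a - a' \<in> jideal m n"
    and g: "g \<in> G" and n': "n' \<in> WB sa G C"
  shows "mul g a - mul g a' \<in> jideal m n'"
proof -
  obtain S f where S: "finite S" "S \<subseteq> objs sa G R" "\<forall>D\<in>S. in_block D m (f D)" "a - sum f S \<in> lideal m"
    by (rule block_decomposition[OF B0 m])
  have c: "a' - component f S C \<in> lideal m"
    using representative_component[OF C n inj S a'] .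
  have "a = (a - sum f S) + component f S C + sum f (S - {C})"
    using sum_split_component[OF S(1), of f C] by simp
  then have "mul g a = mul g (a - sum f S) + mul g (component f S C) + (\<Sum>D\<in>S - {C}. mul g (f D))"
    by (metis mul_distrib_left mul_sum_right)
  then have e: "mul g a - mul g a'
      = mul g (a - sum f S) + (\<Sum>D\<in>S - {C}. mul g (f D)) + - mul g (a' - component f S C)"
    by (simp add: mul_diff_right algebra_simps)
  have "mul g (a - sum f S) \<in> jideal m n'" using lideal_mul[OF S(4)] lideal_subset_jideal by blast
  moreover have "(\<Sum>D\<in>S - {C}. mul g (f D)) \<in> jideal m n'"
    using S mul_other_block_in_jideal[OF _ C _ _ g n'] by (intro V.subspace_sum[OF jideal_subspace]) blast
  moreover have "- mul g (a' - component f S C) \<in> jideal m n'"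
    using lideal_mul[OF c] lideal_subset_jideal V.subspace_neg[OF lideal_subspace] by blast
  ultimately show ?thesis unfolding e using V.subspace_add[OF jideal_subspace] by metis
qed

lemma representative_exists:
  assumes C: "C \<in> objs sa G R" and n: "n \<in> WB sa G C"
  obtains a' where "in_block C m a'" "a - a' \<in> jideal m n"
proof -
  obtain S f where S: "finite S" "S \<subseteq> objs sa G R" "\<forall>D\<in>S. in_block D m (f D)" "a - sum f S \<in> lideal m"
    by (rule block_decomposition[OF B0 m])
  have "a - component f S C = (a - sum f S) + sum f (S - {C})"
    using sum_split_component[OF S(1), of f C] by (simp add: algebra_simps)
  moreover have "a - sum f S \<in> jideal m n" using S(4) lideal_subset_jideal by blast
  moreover have "sum f (S - {C}) \<in> jideal m n"
    using sum_other_blocks_in_jideal[OF C n S(2,3)] .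
  ultimately have "a - component f S C \<in> jideal m n" using V.subspace_add[OF jideal_subspace] by metis
  then show ?thesis using that in_block_component[OF S(3)] by blast
qed

definition avoids_block :: "'a set set \<Rightarrow> 'a \<Rightarrow> bool" where
  "avoids_block C z \<longleftrightarrow> (\<exists>S f. finite S \<and> S \<subseteq> objs sa G R - {C} \<and>
      (\<forall>D\<in>S. in_block D m (f D)) \<and> z - sum f S \<in> lideal m)"

lemma avoids_block_subspace: "V.subspace {z. avoids_block C z}"
  unfolding V.subspace_def
proof (intro conjI ballI allI)
  show "0 \<in> {z. avoids_block C z}" unfolding avoids_block_def
    by (intro CollectI exI[of _ "{}"] exI[of _ "\<lambda>_. 0"]) (simp add: V.subspace_0[OF lideal_subspace])
next
  fix x y assume "x \<in> {z. avoids_block C z}" "y \<in> {z. avoids_block C z}"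
  then obtain S1 f1 S2 f2 where
    S1: "finite S1" "S1 \<subseteq> objs sa G R - {C}" "\<forall>D\<in>S1. in_block D m (f1 D)" "x - sum f1 S1 \<in> lideal m" and
    S2: "finite S2" "S2 \<subseteq> objs sa G R - {C}" "\<forall>D\<in>S2. in_block D m (f2 D)" "y - sum f2 S2 \<in> lideal m"
    unfolding avoids_block_def by (auto simp del: Diff_iff)
  let ?S = "S1 \<union> S2"
  let ?f = "\<lambda>D. component f1 S1 D + component f2 S2 D"
  have "sum ?f ?S = sum f1 S1 + sum f2 S2"
    using sum_component[of ?S S1 f1] sum_component[of ?S S2 f2] S1(1) S2(1) by (simp add: sum.distrib)
  then have "(x + y) - sum ?f ?S = (x - sum f1 S1) + (y - sum f2 S2)" by (simp add: algebra_simps)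
  then have "(x + y) - sum ?f ?S \<in> lideal m" using S1(4) S2(4) V.subspace_add[OF lideal_subspace] by metis
  moreover have "\<forall>D\<in>?S. in_block D m (?f D)"
    using S1 S2 in_block_add in_block_component by blast
  ultimately show "x + y \<in> {z. avoids_block C z}" unfolding avoids_block_def using S1 S2
    by (intro CollectI exI[of _ ?S] exI[of _ ?f]) auto
next
  fix c x assume "x \<in> {z. avoids_block C z}"
  then obtain S f where
    S: "finite S" "S \<subseteq> objs sa G R - {C}" "\<forall>D\<in>S. in_block D m (f D)" "x - sum f S \<in> lideal m"
    unfolding avoids_block_def by (auto simp del: Diff_iff)
  have "sa c x - (\<Sum>D\<in>S. sa c (f D)) = sa c (x - sum f S)"
    by (simp add: V.scale_sum_right V.scale_right_diff_distrib)
  then have "sa c x - (\<Sum>D\<in>S. sa c (f D)) \<in> lideal m" using S(4) V.subspace_scale[OF lideal_subspace] by metis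
  moreover have "\<forall>D\<in>S. in_block D m (sa c (f D))" using S(3) in_block_scale by blast
  ultimately show "sa c x \<in> {z. avoids_block C z}" unfolding avoids_block_def using S(1,2)
    by (intro CollectI exI[of _ S] exI[of _ "\<lambda>D. sa c (f D)"]) auto
qed

lemma rideal_avoids_block:
  assumes C: "C \<in> objs sa G R" and k: "k \<in> WB sa G C"
    and kills: "\<And>v x. in_block C m v \<Longrightarrow> x \<in> k \<Longrightarrow> mul x v \<in> lideal m"
    and "n \<subseteq> k" and r: "r \<in> rideal n"
  shows "avoids_block C r"
  using r unfolding rideal_def
proof (induction rule: V.span_induct)
  case base
  show ?case using avoids_block_subspace by simp
next
  case (step s)
  then obtain x z where xz: "s = mul x z" "x \<in> n" by blast
  have x: "x \<in> k" "x \<in> G" using xz(2) \<open>n \<subseteq> k\<close> WB_subset[OF k C] by auto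
  obtain S f where S: "finite S" "S \<subseteq> objs sa G R" "\<forall>D\<in>S. in_block D m (f D)" "z - sum f S \<in> lideal m"
    by (rule block_decomposition[OF B0 m])
  have "z = (z - sum f S) + component f S C + sum f (S - {C})"
    using sum_split_component[OF S(1), of f C] by simp
  then have "s - (\<Sum>D\<in>S - {C}. mul x (f D)) = mul x (z - sum f S) + mul x (component f S C)"
    using xz(1) by (metis add_diff_cancel_right' mul_distrib_left mul_sum_right)
  moreover have "mul x (component f S C) \<in> lideal m"
    using kills[OF in_block_component[OF S(3)] x(1)] .
  ultimately have "s - (\<Sum>D\<in>S - {C}. mul x (f D)) \<in> lideal m"
    using lideal_mul[OF S(4)] V.subspace_add[OF lideal_subspace] by metis
  moreover have "\<forall>D\<in>S - {C}. in_block D m (mul x (f D))"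
    using S(2,3) in_block_mul[OF _ x(2)] by blast
  ultimately show ?case unfolding avoids_block_def using S(1,2)
    by (intro exI[of _ "S - {C}"] exI[of _ "\<lambda>D. mul x (f D)"]) auto
qed

text \<open>Once \<open>n\<close> lies in an ideal of \<open>W(C)\<close> killing \<open>(A/Am)(C)\<close>, elements of \<open>nA\<close> have
  no \<open>C\<close>-component, so uniqueness of block decompositions gives injectivity.\<close>

lemma injective_eventually:
  assumes C: "C \<in> objs sa G R"
  obtains k where "k \<in> WB sa G C" "\<And>n. n \<in> WB sa G C \<Longrightarrow> n \<subseteq> k \<Longrightarrow> injective_at C m n"
proof -
  obtain k where k: "k \<in> WB sa G C" and kills: "\<And>v x. in_block C m v \<Longrightarrow> x \<in> k \<Longrightarrow> mul x v \<in> lideal m"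
    using block_uniformly_killed[OF B0 m C] by blast
  have "injective_at C m n" if nk: "n \<subseteq> k" for n
    unfolding injective_at_def
  proof (intro allI impI, elim conjE)
    fix a' assume a': "in_block C m a'" and "a' \<in> jideal m n"
    then obtain l r where lr: "a' = l + r" "l \<in> lideal m" "r \<in> rideal n"
      unfolding jideal_eq by blast
    obtain S f where S: "finite S" "S \<subseteq> objs sa G R - {C}" "\<forall>D\<in>S. in_block D m (f D)"
      "r - sum f S \<in> lideal m"
      using rideal_avoids_block[OF C k kills nk lr(3)] unfolding avoids_block_def by blast
    let ?g = "\<lambda>D. if D = C then a' else - f D"
    have "C \<notin> S" using S(2) by blast
    have "sum ?g S = sum (\<lambda>D. - f D) S" using \<open>C \<notin> S\<close> by (intro sum.cong) auto
    then have "sum ?g (insert C S) = l + (r - sum f S)"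
      using S(1) \<open>C \<notin> S\<close> lr(1) by (simp add: sum_negf)
    then have "sum ?g (insert C S) \<in> lideal m"
      using lr(2) S(4) V.subspace_add[OF lideal_subspace] by metis
    moreover have "\<forall>D\<in>insert C S. in_block D m (?g D)" using a' S(3) in_block_neg by auto
    moreover have "finite (insert C S)" "insert C S \<subseteq> objs sa G R" using S C by auto
    ultimately have "?g C \<in> lideal m" using block_sum_in_lideal[OF B0 m, of "insert C S" ?g C] by simp
    then show "a' \<in> lideal m" by simp
  qed
  then show ?thesis by (rule that[OF k]) simp
qed

end

lemma representative_of_block_element:
  assumes B0: "B0 \<in> objs sa G R" and m: "m \<in> WB sa G B0" and m': "m' \<in> WB sa G B0" "m' \<subseteq> m"
    and E: "E \<in> objs sa G R" and n: "n \<in> WB sa G E" and inj: "injective_at E m' n"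
    and a0: "in_block E m' a0" "e - a0 \<in> jideal m' n" and e: "in_block E m e"
  shows "a0 - e \<in> lideal m"
proof -
  have mono: "lideal m' \<subseteq> lideal m" using lideal_mono[OF m'(2)] .
  obtain S f where S: "finite S" "S \<subseteq> objs sa G R" "\<forall>D\<in>S. in_block D m' (f D)" "e - sum f S \<in> lideal m'"
    by (rule block_decomposition[OF B0 m'(1)])
  have "a0 - component f S E \<in> lideal m"
    using representative_component[OF E n inj S a0] mono by blast
  moreover have "sum f S - e \<in> lideal m"
    using V.subspace_neg[OF lideal_subspace S(4)] mono by auto
  then have "component f S E - e \<in> lideal m"
    using component_eq_block_element[OF B0 m S(1,2) _ E e] S(3) in_block_mono[OF mono] by blast
  ultimately have "(a0 - component f S E) + (component f S E - e) \<in> lideal m"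
    using V.subspace_add[OF lideal_subspace] by blast
  then show ?thesis by simp
qed

end

section \<open>Composition of the morphisms \<open>(a)\<close>\<close>

sublocale hc_block_subalg \<subseteq> Left: hc_side sa G R "(*)"
proof unfold_locales
  fix B m assume B: "B \<in> objs sa G R" and m: "m \<in> WB sa G B"
  have "{z * x |z x. x \<in> m} = {x * y |x y. x \<in> UNIV \<and> y \<in> m}" by auto
  then show "strong_block_module sa G R UNIV (V.span {z * x |z x. x \<in> m}) (*)"
    using strong_HC B m unfolding strong_HC_block_subalg_def lid_def iprod_def by auto
qed (auto simp: algebra_simps scale_mult_left[symmetric] scale_mult_right[symmetric]
  intro: tsideal_mult_left tsideal_mult_right)

sublocale hc_block_subalg \<subseteq> Right: hc_side sa G R "\<lambda>x y. y * x"
proof unfold_locales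
  fix B m assume B: "B \<in> objs sa G R" and m: "m \<in> WB sa G B"
  have "{x * z |z x. x \<in> m} = {x * y |x y. x \<in> m \<and> y \<in> UNIV}" by auto
  then show "strong_block_module sa G R UNIV (V.span {x * z |z x. x \<in> m}) (\<lambda>x y. y * x)"
    using strong_HC B m unfolding strong_HC_block_subalg_def rid_def iprod_def by auto
qed (auto simp: algebra_simps mult.assoc scale_mult_left[symmetric] scale_mult_right[symmetric]
  intro: tsideal_mult_left tsideal_mult_right)

context hc_block_subalg
begin

lemma Left_lideal: "Left.lideal m = lid sa m"
proof -
  have "{z * x |z x. x \<in> m} = {x * y |x y. x \<in> UNIV \<and> y \<in> m}" by auto
  then show ?thesis unfolding Left.lideal_def lid_def iprod_def by simp
qed

lemma Right_lideal: "Right.lideal m = rid sa m"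
proof -
  have "{x * z |z x. x \<in> m} = {x * y |x y. x \<in> m \<and> y \<in> UNIV}" by auto
  then show ?thesis unfolding Right.lideal_def rid_def iprod_def by simp
qed

lemma Left_jideal: "Left.jideal m n = Jid sa m n"
proof -
  have "{z * x |z x. x \<in> m} \<union> {x * z |x z. x \<in> n}
      = {x * y |x y. x \<in> n \<and> y \<in> UNIV} \<union> {x * y |x y. x \<in> UNIV \<and> y \<in> m}" by blast
  then show ?thesis unfolding Left.jideal_def Jid_eq_span by simp
qed

lemma Right_jideal: "Right.jideal l n = Jid sa n l"
proof -
  have "{x * z |z x. x \<in> l} \<union> {z * x |x z. x \<in> n}
      = {x * y |x y. x \<in> l \<and> y \<in> UNIV} \<union> {x * y |x y. x \<in> UNIV \<and> y \<in> n}" by blast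
  then show ?thesis unfolding Right.jideal_def Jid_eq_span by (simp add: Un_commute)
qed

lemma comp_ok_exists:
  assumes B: "B \<in> objs sa G R" and C: "C \<in> objs sa G R" and D: "D \<in> objs sa G R"
    and m: "m \<in> WB sa G B" and l: "l \<in> WB sa G D"
  shows "\<exists>t. comp_ok sa G C (hom_of sa G b C D) (hom_of sa G a B C) m l t"
proof -
  obtain kL where kL: "kL \<in> WB sa G C"
    "\<And>n. n \<in> WB sa G C \<Longrightarrow> n \<subseteq> kL \<Longrightarrow> Left.injective_at C m n"
    using Left.injective_eventually[OF B m C] by blast
  obtain kR where kR: "kR \<in> WB sa G C"
    "\<And>n. n \<in> WB sa G C \<Longrightarrow> n \<subseteq> kR \<Longrightarrow> Right.injective_at C l n"
    using Right.injective_eventually[OF D l C] by blast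
  obtain n where n: "n \<in> WB sa G C" "n \<subseteq> kL" "n \<subseteq> kR"
    by (rule WB_lower_bound[OF kL(1) kR(1) C])
  have surjL: "\<forall>a. \<exists>a'. Left.in_block C m a' \<and> a - a' \<in> Left.jideal m n"
    using Left.representative_exists[OF B m C n(1)] by metis
  have surjR: "\<forall>a. \<exists>a'. Right.in_block C l a' \<and> a - a' \<in> Right.jideal l n"
    using Right.representative_exists[OF D l C n(1)] by metis
  obtain a0 where a0: "Left.in_block C m a0" "a - a0 \<in> Jid sa m n"
    using surjL Left_jideal by blast
  obtain b0 where b0: "Right.in_block C l b0" "b - b0 \<in> Jid sa n l"
    using surjR Right_jideal by blast
  have "a0 - a \<in> Jid sa m n" "b0 - b \<in> Jid sa n l"
    using V.subspace_neg[OF Jid_subspace a0(2)] V.subspace_neg[OF Jid_subspace b0(2)] by simp_all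
  then have "a0 \<in> hom_of sa G a B C m n" "b0 \<in> hom_of sa G b C D n l"
    using hom_of_apply[OF m n(1)] hom_of_apply[OF n(1) l] by (simp_all add: coset_iff)
  then have "comp_ok sa G C (hom_of sa G b C D) (hom_of sa G a B C) m l (n, a0, b0)"
    unfolding comp_ok_def prod.case
    using n(1) kL(2)[OF n(1,2)] kR(2)[OF n(1,3)] surjL surjR a0(1) b0(1)
    unfolding Left.injective_at_def Right.injective_at_def Left_lideal Right_lideal Left_jideal Right_jideal
    by blast
  then show ?thesis by blast
qed

lemma hom_comp_hom_of_witness:
  assumes B: "B \<in> objs sa G R" and C: "C \<in> objs sa G R" and D: "D \<in> objs sa G R"
    and m: "m \<in> WB sa G B" and l: "l \<in> WB sa G D"
  obtains n a0 b0 where "n \<in> WB sa G C" "Left.injective_at C m n" "Right.injective_at C l n"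
    "Left.in_block C m a0" "a0 - a \<in> Jid sa m n"
    "Right.in_block C l b0" "b0 - b \<in> Jid sa n l"
    "hom_comp sa G B C D (hom_of sa G b C D) (hom_of sa G a B C) m l = coset (Jid sa m l) (b0 * a0)"
proof -
  let ?P = "comp_ok sa G C (hom_of sa G b C D) (hom_of sa G a B C) m l"
  obtain n a0 b0 where t: "(SOME t. ?P t) = (n, a0, b0)" by (metis prod.exhaust)
  have P: "?P (n, a0, b0)" using someI_ex[OF comp_ok_exists[OF B C D m l, of b a]] unfolding t .
  have n: "n \<in> WB sa G C" using P unfolding comp_ok_def by simp
  show ?thesis
  proof (rule that[OF n])
    show "Left.injective_at C m n" "Right.injective_at C l n" "Left.in_block C m a0" "Right.in_block C l b0"
      using P unfolding comp_ok_def prod.case Left.injective_at_def Right.injective_at_def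
        Left_lideal Right_lideal Left_jideal Right_jideal by simp_all
    show "a0 - a \<in> Jid sa m n" "b0 - b \<in> Jid sa n l"
      using P hom_of_apply[OF m n] hom_of_apply[OF n l] unfolding comp_ok_def prod.case
      by (simp_all add: coset_iff)
    show "hom_comp sa G B C D (hom_of sa G b C D) (hom_of sa G a B C) m l = coset (Jid sa m l) (b0 * a0)"
      unfolding hom_comp_def using m l t by simp
  qed
qed

end

context hc_block_subalg
begin

lemma hom_comp_outside:
  "\<not> (m \<in> WB sa G B \<and> l \<in> WB sa G D) \<Longrightarrow> hom_comp sa G B C D \<beta> \<alpha> m l = {}"
  unfolding hom_comp_def by (rule if_not_P)

lemma hom_comp_hom_of_G:
  assumes B: "B \<in> objs sa G R" and C: "C \<in> objs sa G R" and x: "x \<in> G"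
  shows "hom_comp sa G B B C (hom_of sa G y B C) (hom_of sa G x B B) = hom_of sa G (y * x) B C"
proof (intro ext)
  fix m l
  show "hom_comp sa G B B C (hom_of sa G y B C) (hom_of sa G x B B) m l = hom_of sa G (y * x) B C m l"
  proof (cases "m \<in> WB sa G B \<and> l \<in> WB sa G C")
    case False
    then show ?thesis using hom_comp_outside hom_of_outside by metis
  next
    case True
    then have m: "m \<in> WB sa G B" and l: "l \<in> WB sa G C" by auto
    obtain n a0 b0 where n: "n \<in> WB sa G B" and injR: "Right.injective_at B l n"
      and a0: "a0 - x \<in> Jid sa m n" and pb: "Right.in_block B l b0" and b0: "b0 - y \<in> Jid sa n l"
      and hc: "hom_comp sa G B B C (hom_of sa G y B C) (hom_of sa G x B B) m l = coset (Jid sa m l) (b0 * a0)"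
      by (rule hom_comp_hom_of_witness[OF B B C m l, of x y])
    obtain r l' where rl: "a0 - x = r + l'" "r \<in> rid sa n" "l' \<in> lid sa m"
      using a0 unfolding Jid_def by blast
    have "b0 * r \<in> rid sa l"
      using Right.lideal_mul_in_block[OF B n injR pb, of r] rl(2) unfolding Right_lideal by simp
    moreover have "b0 * l' \<in> lid sa m"
      using Left.lideal_mul[of l' m b0] rl(3) unfolding Left_lideal by simp
    ultimately have "b0 * r + b0 * l' \<in> Jid sa m l"
      using rid_subset_Jid lid_subset_Jid V.subspace_add[OF Jid_subspace] by blast
    moreover have "y - b0 \<in> Right.jideal l n"
      using V.subspace_neg[OF Jid_subspace b0] unfolding Right_jideal by simp
    then have "y * x - b0 * x \<in> Jid sa m l"
      using Right.mul_representative[OF C l B n injR pb _ x m, of y] unfolding Right_jideal by simp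
    moreover have "b0 * a0 - y * x = b0 * r + b0 * l' - (y * x - b0 * x)"
    proof -
      have "a0 = x + r + l'" using rl(1) by (simp add: algebra_simps)
      then show ?thesis by (simp add: algebra_simps)
    qed
    ultimately have "b0 * a0 - y * x \<in> Jid sa m l" using V.subspace_diff[OF Jid_subspace] by metis
    then show ?thesis using hc hom_of_apply[OF m l] coset_eq_iff[OF Jid_subspace] by simp
  qed
qed

lemma hom_comp_hom_of_components:
  assumes B: "B \<in> objs sa G R" and C: "C \<in> objs sa G R" and D: "D \<in> objs sa G R"
    and m: "m \<in> WB sa G B" and l: "l \<in> WB sa G D"
    and S: "finite S" "S \<subseteq> objs sa G R" "\<forall>E\<in>S. Left.in_block E m (f E)" "a - sum f S \<in> lid sa m"
    and T: "finite T" "T \<subseteq> objs sa G R" "\<forall>E\<in>T. Right.in_block E l (g E)" "b - sum g T \<in> rid sa l"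
  shows "hom_comp sa G B C D (hom_of sa G b C D) (hom_of sa G a B C) m l
      = coset (Jid sa m l) (Right.component g T C * Left.component f S C)"
proof -
  obtain n a0 b0 where n: "n \<in> WB sa G C"
    and injL: "Left.injective_at C m n" and injR: "Right.injective_at C l n"
    and pa: "Left.in_block C m a0" and a0: "a0 - a \<in> Jid sa m n"
    and pb: "Right.in_block C l b0" and b0: "b0 - b \<in> Jid sa n l"
    and hc: "hom_comp sa G B C D (hom_of sa G b C D) (hom_of sa G a B C) m l = coset (Jid sa m l) (b0 * a0)"
    by (rule hom_comp_hom_of_witness[OF B C D m l, of a b])
  let ?f = "Left.component f S C" and ?g = "Right.component g T C"
  have "a - a0 \<in> Left.jideal m n" using V.subspace_neg[OF Jid_subspace a0] unfolding Left_jideal by simp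
  then have "a0 - ?f \<in> lid sa m"
    using Left.representative_component[OF C n injL S(1,2,3), of a a0] S(4) pa unfolding Left_lideal by simp
  then have "b0 * (a0 - ?f) \<in> Jid sa m l"
    using Left.lideal_mul[of _ m b0] lid_subset_Jid unfolding Left_lideal by blast
  moreover have "b - b0 \<in> Right.jideal l n" using V.subspace_neg[OF Jid_subspace b0] unfolding Right_jideal by simp
  then have "b0 - ?g \<in> rid sa l"
    using Right.representative_component[OF C n injR T(1,2,3), of b b0] T(4) pb unfolding Right_lideal by simp
  then have "(b0 - ?g) * ?f \<in> Jid sa m l"
    using Right.lideal_mul[of _ l ?f] rid_subset_Jid unfolding Right_lideal by blast
  moreover have "b0 * a0 - ?g * ?f = b0 * (a0 - ?f) + (b0 - ?g) * ?f"
    by (simp add: algebra_simps)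
  ultimately have "b0 * a0 - ?g * ?f \<in> Jid sa m l" using V.subspace_add[OF Jid_subspace] by metis
  then show ?thesis using hc coset_eq_iff[OF Jid_subspace] by simp
qed

lemma hom_comp_hom_of_in_homset:
  assumes B: "B \<in> objs sa G R" and C: "C \<in> objs sa G R" and D: "D \<in> objs sa G R"
  shows "hom_comp sa G B C D (hom_of sa G b C D) (hom_of sa G a B C) \<in> homset sa G B D"
  unfolding homset_def
proof (intro CollectI conjI allI impI)
  fix m l assume "m \<in> WB sa G B \<and> l \<in> WB sa G D"
  then obtain n a0 b0 where
    "hom_comp sa G B C D (hom_of sa G b C D) (hom_of sa G a B C) m l = coset (Jid sa m l) (b0 * a0)"
    using hom_comp_hom_of_witness[OF B C D, of m l a b] by blast
  then show "\<exists>c. hom_comp sa G B C D (hom_of sa G b C D) (hom_of sa G a B C) m l = coset (Jid sa m l) c"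
    by blast
next
  fix m l assume "\<not> (m \<in> WB sa G B \<and> l \<in> WB sa G D)"
  then show "hom_comp sa G B C D (hom_of sa G b C D) (hom_of sa G a B C) m l = {}"
    by (rule hom_comp_outside)
next
  fix m m' l l'
  assume "m \<in> WB sa G B \<and> m' \<in> WB sa G B \<and> l \<in> WB sa G D \<and> l' \<in> WB sa G D \<and> m \<subseteq> m' \<and> l \<subseteq> l'"
  then have m: "m \<in> WB sa G B" "m' \<in> WB sa G B" "m \<subseteq> m'" and l: "l \<in> WB sa G D" "l' \<in> WB sa G D" "l \<subseteq> l'"
    by auto
  obtain S f where S: "finite S" "S \<subseteq> objs sa G R" "\<forall>E\<in>S. Left.in_block E m (f E)" "a - sum f S \<in> lid sa m"
    using Left.block_decomposition[OF B m(1)] unfolding Left_lideal by blast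
  obtain T g where T: "finite T" "T \<subseteq> objs sa G R" "\<forall>E\<in>T. Right.in_block E l (g E)" "b - sum g T \<in> rid sa l"
    using Right.block_decomposition[OF D l(1)] unfolding Right_lideal by blast
  have S': "\<forall>E\<in>S. Left.in_block E m' (f E)" "a - sum f S \<in> lid sa m'"
    using S(3,4) Left.in_block_mono[OF Left.lideal_mono[OF m(3)]] Left.lideal_mono[OF m(3)]
    unfolding Left_lideal by auto
  have T': "\<forall>E\<in>T. Right.in_block E l' (g E)" "b - sum g T \<in> rid sa l'"
    using T(3,4) Right.in_block_mono[OF Right.lideal_mono[OF l(3)]] Right.lideal_mono[OF l(3)]
    unfolding Right_lideal by auto
  show "hom_comp sa G B C D (hom_of sa G b C D) (hom_of sa G a B C) m l
      \<subseteq> hom_comp sa G B C D (hom_of sa G b C D) (hom_of sa G a B C) m' l'"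
    unfolding hom_comp_hom_of_components[OF B C D m(1) l(1) S T]
      hom_comp_hom_of_components[OF B C D m(2) l(2) S(1,2) S' T(1,2) T']
    using coset_mono[OF Jid_mono[OF m(3) l(3)]] .
qed

lemma witness_mult:
  assumes E: "E \<in> objs sa G R" and n: "n \<in> WB sa G E" and inj: "Left.injective_at E m n"
    and a0: "Left.in_block E m a0" and b0: "b0 - b \<in> Jid sa n l"
  shows "b0 * a0 - b * a0 \<in> Jid sa m l"
proof -
  obtain r l' where rl: "b0 - b = r + l'" "r \<in> rid sa l" "l' \<in> lid sa n"
    using b0 unfolding Jid_def by blast
  have "r * a0 \<in> Jid sa m l"
    using Right.lideal_mul[of r l a0] rl(2) rid_subset_Jid unfolding Right_lideal by blast
  moreover have "l' * a0 \<in> Jid sa m l"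
    using Left.lideal_mul_in_block[OF E n inj a0, of l'] rl(3) lid_subset_Jid unfolding Left_lideal by blast
  moreover have "b0 * a0 - b * a0 = r * a0 + l' * a0" using rl(1) by (simp add: algebra_simps)
  ultimately show ?thesis using V.subspace_add[OF Jid_subspace] by metis
qed

end

section \<open>Profinite \<open>\<A>\<close>-modules\<close>

locale profinite_module = hc_block_subalg sa G R for sa :: "'k::field \<Rightarrow> 'a::ring_1 \<Rightarrow> 'a" and G R +
  fixes sv :: "'k \<Rightarrow> 'v::ab_group_add \<Rightarrow> 'v" and Fo :: "'a set set \<Rightarrow> 'v set"
    and Fm :: "'a set set \<Rightarrow> 'a set set \<Rightarrow> 'a hom \<Rightarrow> 'v \<Rightarrow> 'v"
  assumes vector_space_sv: "vector_space sv" and profinite: "profinite_Amodule sa G R sv Fo Fm"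
begin

sublocale Vv: vector_space sv by (rule vector_space_sv)

abbreviation Fa :: "'a set set \<Rightarrow> 'a set set \<Rightarrow> 'a \<Rightarrow> 'v \<Rightarrow> 'v" where
  "Fa B C a \<equiv> Fm B C (hom_of sa G a B C)"

lemma F_is_Amodule: "is_Amodule sa G R sv Fo Fm"
  using profinite unfolding profinite_Amodule_def by (rule conjunct1)

lemma F_subspace: "B \<in> objs sa G R \<Longrightarrow> Vv.subspace (Fo B)"
  using F_is_Amodule unfolding is_Amodule_def by auto

context
  fixes B C
  assumes B: "B \<in> objs sa G R" and C: "C \<in> objs sa G R"
begin

lemma F_closed: "\<alpha> \<in> homset sa G B C \<Longrightarrow> v \<in> Fo B \<Longrightarrow> Fm B C \<alpha> v \<in> Fo C"
  and F_add: "\<alpha> \<in> homset sa G B C \<Longrightarrow> v \<in> Fo B \<Longrightarrow> w \<in> Fo B \<Longrightarrow>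
    Fm B C \<alpha> (v + w) = Fm B C \<alpha> v + Fm B C \<alpha> w"
  and F_scale: "\<alpha> \<in> homset sa G B C \<Longrightarrow> v \<in> Fo B \<Longrightarrow> Fm B C \<alpha> (sv c v) = sv c (Fm B C \<alpha> v)"
  and F_hom_add: "\<alpha> \<in> homset sa G B C \<Longrightarrow> \<beta> \<in> homset sa G B C \<Longrightarrow> v \<in> Fo B \<Longrightarrow>
    Fm B C (hom_add \<alpha> \<beta>) v = Fm B C \<alpha> v + Fm B C \<beta> v"
  and F_hom_scale: "\<alpha> \<in> homset sa G B C \<Longrightarrow> v \<in> Fo B \<Longrightarrow>
    Fm B C (hom_scale sa c \<alpha>) v = sv c (Fm B C \<alpha> v)"
  using F_is_Amodule B C unfolding is_Amodule_def by auto

lemma F_continuous: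
  "\<alpha> \<in> homset sa G B C \<Longrightarrow> finite S \<Longrightarrow> S \<subseteq> Fo B \<Longrightarrow>
    \<exists>I. finite I \<and> I \<subseteq> WB sa G B \<times> WB sa G C \<and>
      (\<forall>\<beta>\<in>homset sa G B C. (\<forall>(m, n)\<in>I. \<beta> m n = \<alpha> m n) \<longrightarrow>
        (\<forall>v\<in>Vv.span S. Fm B C \<beta> v = Fm B C \<alpha> v))"
  using profinite B C unfolding profinite_Amodule_def by blast

lemma F_zero: "\<alpha> \<in> homset sa G B C \<Longrightarrow> Fm B C \<alpha> 0 = 0"
  using F_add[of \<alpha> 0 0] Vv.subspace_0[OF F_subspace[OF B]] by simp

lemma F_sum:
  assumes "\<alpha> \<in> homset sa G B C" "\<And>i. i \<in> S \<Longrightarrow> f i \<in> Fo B"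
  shows "Fm B C \<alpha> (sum f S) = (\<Sum>i\<in>S. Fm B C \<alpha> (f i))"
  using assms(2)
proof (induction S rule: infinite_finite_induct)
  case (insert x S)
  have "sum f S \<in> Fo B" using insert by (intro Vv.subspace_sum[OF F_subspace[OF B]]) auto
  then show ?case using insert F_add[OF assms(1)] by simp
qed (simp_all add: F_zero[OF assms(1)])

lemma Fa_add: "v \<in> Fo B \<Longrightarrow> Fa B C (a + b) v = Fa B C a v + Fa B C b v"
  using F_hom_add[OF hom_of_in_homset hom_of_in_homset] hom_add_hom_of by metis

lemma Fa_scale: "v \<in> Fo B \<Longrightarrow> Fa B C (sa c a) v = sv c (Fa B C a v)"
  using F_hom_scale[OF hom_of_in_homset] hom_scale_hom_of by metis

lemma Fa_zero: "v \<in> Fo B \<Longrightarrow> Fa B C 0 v = 0"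
  using Fa_scale[of v 0 0] by simp

lemma Fa_sum: "v \<in> Fo B \<Longrightarrow> Fa B C (sum f S) v = (\<Sum>i\<in>S. Fa B C (f i) v)"
  by (induction S rule: infinite_finite_induct) (auto simp: Fa_zero Fa_add)

lemma Fa_closed: "v \<in> Fo B \<Longrightarrow> Fa B C a v \<in> Fo C"
  using F_closed[OF hom_of_in_homset] .

lemma Fa_kernel_subspace: "v \<in> Fo B \<Longrightarrow> V.subspace {a. Fa B C a v = 0}"
  unfolding V.subspace_def using Fa_zero Fa_add Fa_scale by auto

lemma Fa_offdiag: "B \<noteq> C \<Longrightarrow> x \<in> G \<Longrightarrow> v \<in> Fo B \<Longrightarrow> Fa B C x v = 0"
  using hom_of_offdiag[OF B C] Fa_zero by metis

text \<open>One index suffices since \<open>W(B)\<close> and \<open>W(C)\<close> are downward directed and the components of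
  \<open>\<alpha>\<close> are compatible cosets.\<close>

lemma F_locally_constant:
  assumes \<alpha>: "\<alpha> \<in> homset sa G B C" and v: "v \<in> Fo B"
  obtains m n where "m \<in> WB sa G B" "n \<in> WB sa G C"
    "\<And>m' n' \<beta>. m' \<in> WB sa G B \<Longrightarrow> n' \<in> WB sa G C \<Longrightarrow> m' \<subseteq> m \<Longrightarrow> n' \<subseteq> n \<Longrightarrow>
       \<beta> \<in> homset sa G B C \<Longrightarrow> \<beta> m' n' = \<alpha> m' n' \<Longrightarrow> Fm B C \<beta> v = Fm B C \<alpha> v"
proof -
  obtain I where I: "finite I" "I \<subseteq> WB sa G B \<times> WB sa G C"
    "\<forall>\<beta>\<in>homset sa G B C. (\<forall>(m, n)\<in>I. \<beta> m n = \<alpha> m n) \<longrightarrow> (\<forall>v'\<in>Vv.span {v}. Fm B C \<beta> v' = Fm B C \<alpha> v')"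
    using F_continuous[OF \<alpha>, of "{v}"] v by blast
  have "fst ` I \<subseteq> WB sa G B" "snd ` I \<subseteq> WB sa G C" using I(2) by auto
  obtain m where m: "m \<in> WB sa G B" "\<forall>x\<in>fst ` I. m \<subseteq> x"
    by (rule WB_lower_bound_finite[OF finite_imageI[OF I(1)] \<open>fst ` I \<subseteq> WB sa G B\<close> B])
  obtain n where n: "n \<in> WB sa G C" "\<forall>x\<in>snd ` I. n \<subseteq> x"
    by (rule WB_lower_bound_finite[OF finite_imageI[OF I(1)] \<open>snd ` I \<subseteq> WB sa G C\<close> C])
  show ?thesis
  proof (rule that[OF m(1) n(1)])
    fix m' n' \<beta> assume m': "m' \<in> WB sa G B" and n': "n' \<in> WB sa G C" and "m' \<subseteq> m" "n' \<subseteq> n"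
      and \<beta>: "\<beta> \<in> homset sa G B C" and eq: "\<beta> m' n' = \<alpha> m' n'"
    have "\<beta> mi ni = \<alpha> mi ni" if i: "(mi, ni) \<in> I" for mi ni
    proof -
      have mi: "mi \<in> WB sa G B" and ni: "ni \<in> WB sa G C" using I(2) i by auto
      have "m \<subseteq> mi" "n \<subseteq> ni" using m(2) n(2) i by force+
      then have sub: "m' \<subseteq> mi" "n' \<subseteq> ni" using \<open>m' \<subseteq> m\<close> \<open>n' \<subseteq> n\<close> by auto
      obtain p where p: "\<alpha> m' n' = coset (Jid sa m' n') p" using homset_coset[OF \<alpha> m' n'] by blast
      have "p \<in> \<alpha> m' n'" unfolding p by (rule coset_self[OF Jid_subspace])
      then have pa: "p \<in> \<alpha> mi ni" and pb: "p \<in> \<beta> mi ni"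
        using homset_mono[OF \<alpha> m' mi n' ni sub] homset_mono[OF \<beta> m' mi n' ni sub] eq by auto
      obtain a1 where a1: "\<alpha> mi ni = coset (Jid sa mi ni) a1" using homset_coset[OF \<alpha> mi ni] by blast
      obtain b1 where b1: "\<beta> mi ni = coset (Jid sa mi ni) b1" using homset_coset[OF \<beta> mi ni] by blast
      have "\<alpha> mi ni = coset (Jid sa mi ni) p" using pa unfolding a1 by (rule coset_rebase)
      moreover have "\<beta> mi ni = coset (Jid sa mi ni) p" using pb unfolding b1 by (rule coset_rebase)
      ultimately show ?thesis by simp
    qed
    then have "\<forall>v'\<in>Vv.span {v}. Fm B C \<beta> v' = Fm B C \<alpha> v'" using I(3) \<beta> by blast
    then show "Fm B C \<beta> v = Fm B C \<alpha> v" using Vv.span_base[of v "{v}"] by blast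
  qed
qed

lemma Fa_locally_constant:
  assumes v: "v \<in> Fo B"
  obtains m n where "m \<in> WB sa G B" "n \<in> WB sa G C"
    "\<And>m' n' x. m' \<in> WB sa G B \<Longrightarrow> n' \<in> WB sa G C \<Longrightarrow> m' \<subseteq> m \<Longrightarrow> n' \<subseteq> n \<Longrightarrow>
       x - c \<in> Jid sa m' n' \<Longrightarrow> Fa B C x v = Fa B C c v"
proof -
  obtain m n where m: "m \<in> WB sa G B" and n: "n \<in> WB sa G C"
    and h: "\<And>m' n' \<beta>. m' \<in> WB sa G B \<Longrightarrow> n' \<in> WB sa G C \<Longrightarrow> m' \<subseteq> m \<Longrightarrow> n' \<subseteq> n \<Longrightarrow>
       \<beta> \<in> homset sa G B C \<Longrightarrow> \<beta> m' n' = hom_of sa G c B C m' n' \<Longrightarrow> Fm B C \<beta> v = Fa B C c v"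
    using F_locally_constant[OF hom_of_in_homset v, of c] by blast
  show ?thesis
  proof (rule that[OF m n])
    fix m' n' x assume m': "m' \<in> WB sa G B" and n': "n' \<in> WB sa G C" and "m' \<subseteq> m" "n' \<subseteq> n"
      and "x - c \<in> Jid sa m' n'"
    then have "hom_of sa G x B C m' n' = hom_of sa G c B C m' n'"
      using hom_of_apply[OF m' n'] coset_eq_iff[OF Jid_subspace] by simp
    then show "Fa B C x v = Fa B C c v"
      by (rule h[OF m' n' \<open>m' \<subseteq> m\<close> \<open>n' \<subseteq> n\<close> hom_of_in_homset])
  qed
qed

lemma Fa_vanishes_on_Jid:
  assumes v: "v \<in> Fo B"
  obtains m n where "m \<in> WB sa G B" "n \<in> WB sa G C" "\<And>x. x \<in> Jid sa m n \<Longrightarrow> Fa B C x v = 0"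
proof -
  obtain m n where m: "m \<in> WB sa G B" and n: "n \<in> WB sa G C"
    and h: "\<And>m' n' x. m' \<in> WB sa G B \<Longrightarrow> n' \<in> WB sa G C \<Longrightarrow> m' \<subseteq> m \<Longrightarrow> n' \<subseteq> n \<Longrightarrow>
       x - 0 \<in> Jid sa m' n' \<Longrightarrow> Fa B C x v = Fa B C 0 v"
    using Fa_locally_constant[OF v, of 0] by blast
  show ?thesis
  proof (rule that[OF m n])
    fix x assume "x \<in> Jid sa m n"
    then show "Fa B C x v = 0" using h[OF m n order_refl order_refl] Fa_zero[OF v] by simp
  qed
qed

end

lemma F_id: "B \<in> objs sa G R \<Longrightarrow> v \<in> Fo B \<Longrightarrow> Fa B B 1 v = v"
  using F_is_Amodule unfolding is_Amodule_def by auto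

lemma F_comp:
  "B \<in> objs sa G R \<Longrightarrow> C \<in> objs sa G R \<Longrightarrow> D \<in> objs sa G R \<Longrightarrow> \<alpha> \<in> homset sa G B C \<Longrightarrow>
    \<beta> \<in> homset sa G C D \<Longrightarrow> v \<in> Fo B \<Longrightarrow> Fm B D (hom_comp sa G B C D \<beta> \<alpha>) v = Fm C D \<beta> (Fm B C \<alpha> v)"
  using F_is_Amodule unfolding is_Amodule_def by auto

end

context profinite_module
begin

lemma annihilator_exists:
  assumes B: "B \<in> objs sa G R" and v: "v \<in> Fo B"
  obtains m0 where "m0 \<in> WB sa G B" "\<forall>x\<in>m0. Fa B B x v = 0"
proof -
  obtain m n where m: "m \<in> WB sa G B" and "n \<in> WB sa G B"
    and h: "\<And>x. x \<in> Jid sa m n \<Longrightarrow> Fa B B x v = 0"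
    using Fa_vanishes_on_Jid[OF B B v] by blast
  have "\<forall>x\<in>m. Fa B B x v = 0" using h mem_lid lid_subset_Jid by blast
  then show ?thesis by (rule that[OF m])
qed

context
  fixes B C v m0
  assumes B: "B \<in> objs sa G R" and C: "C \<in> objs sa G R" and v: "v \<in> Fo B"
    and m0: "m0 \<in> WB sa G B" and kills: "\<forall>x\<in>m0. Fa B B x v = 0"
begin

lemma Fa_lid_vanishes:
  assumes "z \<in> lid sa m0"
  shows "Fa B C z v = 0"
proof -
  have "z \<in> V.span {y * x |y x. x \<in> m0}" using assms unfolding Left_lideal[symmetric] Left.lideal_def .
  then show ?thesis
  proof (induction rule: V.span_induct)
    case base
    show ?case using Fa_kernel_subspace[OF B C v] by simp
  next
    case (step s)
    then obtain y x where s: "s = y * x" "x \<in> m0" by blast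
    have "x \<in> G" using WB_subset[OF m0 B] s(2) by blast
    then have "Fa B C (y * x) v = Fm B C (hom_comp sa G B B C (hom_of sa G y B C) (hom_of sa G x B B)) v"
      using hom_comp_hom_of_G[OF B C] by simp
    also have "\<dots> = Fa B C y (Fa B B x v)"
      using F_comp[OF B B C hom_of_in_homset hom_of_in_homset v] .
    also have "\<dots> = 0" using kills s(2) F_zero[OF B C hom_of_in_homset] by simp
    finally show ?case using s(1) by simp
  qed
qed

lemma Fa_other_block_vanishes:
  assumes E: "E \<in> objs sa G R" and "E \<noteq> C" and e: "Left.in_block E m0 e"
  shows "Fa B C e v = 0"
proof -
  obtain q where q: "q \<in> WB sa G E" "\<forall>x\<in>q. x * e \<in> lid sa m0"
    using e unfolding bpart_def Left_lideal by blast
  obtain m1 n1 where "m1 \<in> WB sa G B" and n1: "n1 \<in> WB sa G C"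
    and h: "\<And>x. x \<in> Jid sa m1 n1 \<Longrightarrow> Fa B C x v = 0"
    using Fa_vanishes_on_Jid[OF B C v] by blast
  obtain u w where uw: "u \<in> q" "w \<in> n1" "u + w = 1"
    using WB_comaximal[OF E C \<open>E \<noteq> C\<close> q(1) n1] unfolding comaximal_def by blast
  have "Fa B C (u * e) v = 0" using Fa_lid_vanishes q(2) uw(1) by blast
  moreover have "w * e \<in> Jid sa m1 n1"
    using Right.lideal_mul[of w n1 e] mem_rid[OF uw(2)] rid_subset_Jid unfolding Right_lideal by blast
  then have "Fa B C (w * e) v = 0" by (rule h)
  moreover have "u * e + w * e = e" using uw(3) by (simp add: distrib_right[symmetric])
  ultimately show ?thesis using Fa_add[OF B C v, of "u * e" "w * e"] by simp
qed

lemma Fa_block_decomposition: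
  assumes S: "finite S" "S \<subseteq> objs sa G R" "\<forall>D\<in>S. Left.in_block D m0 (f D)" "b - sum f S \<in> lid sa m0"
  shows "Fa B C b v = (if C \<in> S then Fa B C (f C) v else 0)"
proof -
  have "Fa B C b v = Fa B C (b - sum f S) v + Fa B C (sum f S) v"
    using Fa_add[OF B C v, of "b - sum f S" "sum f S"] by simp
  also have "Fa B C (b - sum f S) v = 0" using Fa_lid_vanishes[OF S(4)] .
  also have "Fa B C (sum f S) v = (\<Sum>D\<in>S. Fa B C (f D) v)" by (rule Fa_sum[OF B C v])
  also have "\<dots> = (\<Sum>D\<in>S. if D = C then Fa B C (f C) v else 0)"
    using S(2,3) Fa_other_block_vanishes by (intro sum.cong) auto
  also have "\<dots> = (if C \<in> S then Fa B C (f C) v else 0)" using S(1) by (simp add: sum.delta)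
  finally show ?thesis by simp
qed

end

lemma Fa_finite_support:
  assumes B: "B \<in> objs sa G R" and v: "v \<in> Fo B"
  shows "finite {C \<in> objs sa G R. Fa B C a v \<noteq> 0}"
proof -
  obtain m0 where m0: "m0 \<in> WB sa G B" and kills: "\<forall>x\<in>m0. Fa B B x v = 0"
    using annihilator_exists[OF B v] by blast
  obtain S f where S: "finite S" "S \<subseteq> objs sa G R" "\<forall>D\<in>S. Left.in_block D m0 (f D)" "a - sum f S \<in> lid sa m0"
    using Left.block_decomposition[OF B m0] unfolding Left_lideal by blast
  have "C \<in> S" if "C \<in> objs sa G R" "Fa B C a v \<noteq> 0" for C
    using Fa_block_decomposition[OF B that(1) v m0 kills S] that(2) by (auto split: if_splits)
  then have "{C \<in> objs sa G R. Fa B C a v \<noteq> 0} \<subseteq> S" by blast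
  then show ?thesis using S(1) finite_subset by blast
qed

end

context profinite_module
begin

text \<open>Both sides are computed at one index \<open>(m, l)\<close> that is small enough for the continuity of
  \<open>F\<close> at \<open>(a) \<circ> (e)\<close> and at \<open>(a e)\<close>; there \<open>(a) \<circ> (e)\<close> is represented by \<open>b\<^sub>0 a\<^sub>0\<close>, which
  differs from \<open>a e\<close> by an element of \<open>lA + Am + A m\<^sub>0\<close>.\<close>

lemma Fa_mult_block:
  assumes B: "B \<in> objs sa G R" and E: "E \<in> objs sa G R" and D: "D \<in> objs sa G R" and v: "v \<in> Fo B"
    and m0: "m0 \<in> WB sa G B" and kills: "\<forall>x\<in>m0. Fa B B x v = 0"
    and e: "Left.in_block E m0 e"
  shows "Fa B D (a * e) v = Fa E D a (Fa B E e v)"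
proof -
  let ?g = "hom_comp sa G B E D (hom_of sa G a E D) (hom_of sa G e B E)"
  have g: "?g \<in> homset sa G B D" by (rule hom_comp_hom_of_in_homset[OF B E D])
  obtain m1 l1 where "m1 \<in> WB sa G B" "l1 \<in> WB sa G D"
    and h1: "\<And>m' n' \<beta>. m' \<in> WB sa G B \<Longrightarrow> n' \<in> WB sa G D \<Longrightarrow> m' \<subseteq> m1 \<Longrightarrow> n' \<subseteq> l1 \<Longrightarrow>
       \<beta> \<in> homset sa G B D \<Longrightarrow> \<beta> m' n' = ?g m' n' \<Longrightarrow> Fm B D \<beta> v = Fm B D ?g v"
    using F_locally_constant[OF B D g v] by blast
  obtain m2 l2 where "m2 \<in> WB sa G B" "l2 \<in> WB sa G D"
    and h2: "\<And>m' n' x. m' \<in> WB sa G B \<Longrightarrow> n' \<in> WB sa G D \<Longrightarrow> m' \<subseteq> m2 \<Longrightarrow> n' \<subseteq> l2 \<Longrightarrow>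
       x - a * e \<in> Jid sa m' n' \<Longrightarrow> Fa B D x v = Fa B D (a * e) v"
    using Fa_locally_constant[OF B D v, of "a * e"] by blast
  obtain m where m: "m \<in> WB sa G B" "\<forall>x\<in>{m0, m1, m2}. m \<subseteq> x"
    by (rule WB_lower_bound_finite[of "{m0, m1, m2}" B]) (use B m0 \<open>m1 \<in> WB sa G B\<close> \<open>m2 \<in> WB sa G B\<close> in auto)
  obtain l where l: "l \<in> WB sa G D" "\<forall>x\<in>{l1, l2}. l \<subseteq> x"
    by (rule WB_lower_bound_finite[of "{l1, l2}" D]) (use D \<open>l1 \<in> WB sa G D\<close> \<open>l2 \<in> WB sa G D\<close> in auto)
  have sub: "m \<subseteq> m0" "m \<subseteq> m1" "m \<subseteq> m2" "l \<subseteq> l1" "l \<subseteq> l2" using m(2) l(2) by auto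
  obtain n a0 b0 where n: "n \<in> WB sa G E" and inj: "Left.injective_at E m n"
    and "Right.injective_at E l n" and a0: "Left.in_block E m a0" "a0 - e \<in> Jid sa m n"
    and "Right.in_block E l b0" and b0: "b0 - a \<in> Jid sa n l"
    and hc: "?g m l = coset (Jid sa m l) (b0 * a0)"
    by (rule hom_comp_hom_of_witness[OF B E D m(1) l(1), of e a])
  have "e - a0 \<in> Left.jideal m n" using V.subspace_neg[OF Jid_subspace a0(2)] unfolding Left_jideal by simp
  then have "a0 - e \<in> Left.lideal m0"
    by (rule Left.representative_of_block_element[OF B m0 m(1) sub(1) E n inj a0(1) _ e])
  then have "a * (a0 - e) \<in> lid sa m0" using Left.lideal_mul unfolding Left_lideal by blast
  then have "Fa B D (a * (a0 - e)) v = 0" by (rule Fa_lid_vanishes[OF B D v m0 kills])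
  moreover have "(b0 * a0 - a * a0 + a * e) - a * e \<in> Jid sa m l"
    using witness_mult[OF E n inj a0(1) b0] by simp
  then have "Fa B D (b0 * a0 - a * a0 + a * e) v = Fa B D (a * e) v"
    by (rule h2[OF m(1) l(1) sub(3) sub(5)])
  moreover have "Fa B D (b0 * a0) v = Fa B D (b0 * a0 - a * a0 + a * e) v + Fa B D (a * (a0 - e)) v"
    using Fa_add[OF B D v, of "b0 * a0 - a * a0 + a * e" "a * (a0 - e)"] by (simp add: algebra_simps)
  moreover have "hom_of sa G (b0 * a0) B D m l = ?g m l" using hc hom_of_apply[OF m(1) l(1)] by simp
  then have "Fa B D (b0 * a0) v = Fm B D ?g v" by (rule h1[OF m(1) l(1) sub(2) sub(4) hom_of_in_homset])
  ultimately show ?thesis using F_comp[OF B E D hom_of_in_homset hom_of_in_homset v] by simp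
qed

lemma Fa_mult:
  assumes B: "B \<in> objs sa G R" and D: "D \<in> objs sa G R" and v: "v \<in> Fo B"
    and K: "finite K" "K \<subseteq> objs sa G R" "{C \<in> objs sa G R. Fa B C b v \<noteq> 0} \<subseteq> K"
  shows "Fa B D (a * b) v = (\<Sum>C\<in>K. Fa C D a (Fa B C b v))"
proof -
  obtain m0 where m0: "m0 \<in> WB sa G B" and kills: "\<forall>x\<in>m0. Fa B B x v = 0"
    using annihilator_exists[OF B v] by blast
  obtain S f where S: "finite S" "S \<subseteq> objs sa G R" "\<forall>D\<in>S. Left.in_block D m0 (f D)" "b - sum f S \<in> lid sa m0"
    using Left.block_decomposition[OF B m0] unfolding Left_lideal by blast
  have dec: "Fa B C b v = (if C \<in> S then Fa B C (f C) v else 0)" if "C \<in> objs sa G R" for C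
    by (rule Fa_block_decomposition[OF B that v m0 kills S])
  let ?t = "\<lambda>C. Fa C D a (Fa B C b v)"
  have "(\<Sum>C\<in>K. ?t C) = (\<Sum>C\<in>K \<inter> S. ?t C)"
  proof (rule sum.mono_neutral_right[OF K(1)])
    show "\<forall>C\<in>K - K \<inter> S. ?t C = 0"
    proof
      fix C assume "C \<in> K - K \<inter> S"
      then have "C \<in> objs sa G R" "C \<notin> S" using K(2) by auto
      then show "?t C = 0" using dec F_zero[OF _ D hom_of_in_homset] by simp
    qed
  qed auto
  also have "\<dots> = (\<Sum>C\<in>S. ?t C)"
  proof (rule sum.mono_neutral_left[OF S(1)])
    show "\<forall>C\<in>S - K \<inter> S. ?t C = 0"
    proof
      fix C assume "C \<in> S - K \<inter> S"
      then have "C \<in> objs sa G R" "Fa B C b v = 0" using S(2) K(3) by auto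
      then show "?t C = 0" using F_zero[OF _ D hom_of_in_homset] by simp
    qed
  qed auto
  also have "\<dots> = (\<Sum>C\<in>S. Fa B D (a * f C) v)"
    using S(2,3) dec Fa_mult_block[OF B _ D v m0 kills] by (intro sum.cong) auto
  also have "\<dots> = Fa B D (a * sum f S) v"
    by (simp add: Fa_sum[OF B D v] sum_distrib_left)
  also have "\<dots> = Fa B D (a * b) v"
  proof -
    have "a * (b - sum f S) \<in> lid sa m0" using Left.lideal_mul S(4) unfolding Left_lideal by blast
    then have "Fa B D (a * (b - sum f S)) v = 0" by (rule Fa_lid_vanishes[OF B D v m0 kills])
    then show ?thesis using Fa_add[OF B D v, of "a * (b - sum f S)" "a * sum f S"] by (simp add: algebra_simps)
  qed
  finally show ?thesis by simp
qed

end

section \<open>The module \<open>\<H>(F)\<close>\<close>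

context profinite_module
begin

lemma HF_finite_support: "h \<in> HF sa G R Fo \<Longrightarrow> finite {B. h B \<noteq> 0}"
  and HF_mem: "h \<in> HF sa G R Fo \<Longrightarrow> B \<in> objs sa G R \<Longrightarrow> h B \<in> Fo B"
  and HF_outside: "h \<in> HF sa G R Fo \<Longrightarrow> B \<notin> objs sa G R \<Longrightarrow> h B = 0"
  unfolding HF_def by (auto split: if_splits)

lemma HF_support_subset: "h \<in> HF sa G R Fo \<Longrightarrow> {B. h B \<noteq> 0} \<subseteq> objs sa G R"
  using HF_outside by blast

lemma HFI:
  "finite {B. h B \<noteq> 0} \<Longrightarrow> (\<And>B. B \<in> objs sa G R \<Longrightarrow> h B \<in> Fo B) \<Longrightarrow>
    (\<And>B. B \<notin> objs sa G R \<Longrightarrow> h B = 0) \<Longrightarrow> h \<in> HF sa G R Fo"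
  unfolding HF_def by auto

lemma Hact_outside: "C \<notin> objs sa G R \<Longrightarrow> Hact sa G R Fm a h C = 0"
  unfolding Hact_def by simp

lemma Hact_eq_sum:
  assumes h: "h \<in> HF sa G R Fo" and T: "finite T" "T \<subseteq> objs sa G R" "{B. h B \<noteq> 0} \<subseteq> T"
    and C: "C \<in> objs sa G R"
  shows "Hact sa G R Fm a h C = (\<Sum>B\<in>T. Fa B C a (h B))"
  unfolding Hact_def using C
  by (simp, intro sum.mono_neutral_left[OF T(1) T(3)])
    (use T(2) F_zero[OF _ C hom_of_in_homset] in auto)

lemma Hact_G:
  assumes h: "h \<in> HF sa G R Fo" and C: "C \<in> objs sa G R" and x: "x \<in> G"
  shows "Hact sa G R Fm x h C = Fa C C x (h C)"
proof -
  let ?T = "insert C {B. h B \<noteq> 0}"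
  have T: "finite ?T" "?T \<subseteq> objs sa G R"
    using HF_finite_support[OF h] HF_support_subset[OF h] C by auto
  have "Hact sa G R Fm x h C = (\<Sum>B\<in>?T. Fa B C x (h B))"
    by (rule Hact_eq_sum[OF h T]) (use C in auto)
  also have "\<dots> = Fa C C x (h C) + (\<Sum>B\<in>?T - {C}. Fa B C x (h B))"
    by (rule sum.remove[OF T(1)]) simp
  also have "(\<Sum>B\<in>?T - {C}. Fa B C x (h B)) = 0"
    using T(2) Fa_offdiag[OF _ C _ x] HF_mem[OF h] by (intro sum.neutral) auto
  finally show ?thesis by simp
qed

lemma Hact_closed:
  assumes h: "h \<in> HF sa G R Fo"
  shows "Hact sa G R Fm a h \<in> HF sa G R Fo"
proof (rule HFI)
  let ?S = "{B. h B \<noteq> 0}"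
  have S: "finite ?S" "?S \<subseteq> objs sa G R" using HF_finite_support[OF h] HF_support_subset[OF h] by auto
  have "{C. Hact sa G R Fm a h C \<noteq> 0} \<subseteq> (\<Union>B\<in>?S. {C \<in> objs sa G R. Fa B C a (h B) \<noteq> 0})"
  proof
    fix C assume C: "C \<in> {C. Hact sa G R Fm a h C \<noteq> 0}"
    then have "C \<in> objs sa G R" using Hact_outside by auto
    moreover from this have "(\<Sum>B\<in>?S. Fa B C a (h B)) \<noteq> 0" using C unfolding Hact_def by simp
    then obtain B where "B \<in> ?S" "Fa B C a (h B) \<noteq> 0" by (meson sum.neutral)
    ultimately show "C \<in> (\<Union>B\<in>?S. {C \<in> objs sa G R. Fa B C a (h B) \<noteq> 0})" by blast
  qed
  moreover have "finite (\<Union>B\<in>?S. {C \<in> objs sa G R. Fa B C a (h B) \<noteq> 0})"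
    using S Fa_finite_support HF_mem[OF h] by (intro finite_UN_I) auto
  ultimately show "finite {C. Hact sa G R Fm a h C \<noteq> 0}" by (rule finite_subset)
next
  fix C assume C: "C \<in> objs sa G R"
  show "Hact sa G R Fm a h C \<in> Fo C"
    unfolding Hact_def using C HF_support_subset[OF h] HF_mem[OF h]
    by (auto intro!: Vv.subspace_sum[OF F_subspace[OF C]] Fa_closed)
qed (rule Hact_outside)

lemma module_pointwise: "module (\<lambda>c (h :: 'a set set \<Rightarrow> 'v) B. sv c (h B))"
  unfolding module_def by (auto simp: Vv.scale_right_distrib Vv.scale_left_distrib)

lemma HF_subspace: "module.subspace (\<lambda>c h B. sv c (h B)) (HF sa G R Fo)"
  unfolding module.subspace_def[OF module_pointwise]
proof (intro conjI ballI allI)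
  show "0 \<in> HF sa G R Fo" by (rule HFI) (auto intro: Vv.subspace_0[OF F_subspace])
next
  fix x y assume x: "x \<in> HF sa G R Fo" and y: "y \<in> HF sa G R Fo"
  have "{B. (x + y) B \<noteq> 0} \<subseteq> {B. x B \<noteq> 0} \<union> {B. y B \<noteq> 0}" by auto
  then show "x + y \<in> HF sa G R Fo"
    using HF_finite_support[OF x] HF_finite_support[OF y] HF_outside[OF x] HF_outside[OF y]
      HF_mem[OF x] HF_mem[OF y] Vv.subspace_add[OF F_subspace]
    by (intro HFI) (auto intro: finite_subset)
next
  fix c x assume x: "x \<in> HF sa G R Fo"
  have "{B. sv c (x B) \<noteq> 0} \<subseteq> {B. x B \<noteq> 0}" by auto
  then show "(\<lambda>B. sv c (x B)) \<in> HF sa G R Fo"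
    using HF_finite_support[OF x] HF_outside[OF x] HF_mem[OF x] Vv.subspace_scale[OF F_subspace]
    by (intro HFI) (auto intro: finite_subset)
qed

lemma HF_add: "h \<in> HF sa G R Fo \<Longrightarrow> h' \<in> HF sa G R Fo \<Longrightarrow> h + h' \<in> HF sa G R Fo"
  and HF_scale: "h \<in> HF sa G R Fo \<Longrightarrow> (\<lambda>B. sv c (h B)) \<in> HF sa G R Fo"
  using HF_subspace unfolding module.subspace_def[OF module_pointwise] by blast+

lemma Hact_one: "h \<in> HF sa G R Fo \<Longrightarrow> Hact sa G R Fm 1 h = h"
  using Hact_G[OF _ _ G_one] F_id HF_mem Hact_outside HF_outside by fastforce

lemma Hact_add_left:
  assumes h: "h \<in> HF sa G R Fo"
  shows "Hact sa G R Fm (a + b) h = Hact sa G R Fm a h + Hact sa G R Fm b h"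
proof
  fix C
  show "Hact sa G R Fm (a + b) h C = (Hact sa G R Fm a h + Hact sa G R Fm b h) C"
    unfolding Hact_def using Fa_add[OF _ _ HF_mem[OF h]] HF_support_subset[OF h]
    by (auto simp: sum.distrib[symmetric] intro!: sum.cong)
qed

lemma Hact_scale_left:
  assumes h: "h \<in> HF sa G R Fo"
  shows "Hact sa G R Fm (sa c a) h = (\<lambda>B. sv c (Hact sa G R Fm a h B))"
proof
  fix C
  show "Hact sa G R Fm (sa c a) h C = sv c (Hact sa G R Fm a h C)"
    unfolding Hact_def using Fa_scale[OF _ _ HF_mem[OF h]] HF_support_subset[OF h]
    by (auto simp: Vv.scale_sum_right intro!: sum.cong)
qed

lemma Hact_add_right:
  assumes h: "h \<in> HF sa G R Fo" and h': "h' \<in> HF sa G R Fo"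
  shows "Hact sa G R Fm a (h + h') = Hact sa G R Fm a h + Hact sa G R Fm a h'"
proof
  fix C
  show "Hact sa G R Fm a (h + h') C = (Hact sa G R Fm a h + Hact sa G R Fm a h') C"
  proof (cases "C \<in> objs sa G R")
    case C: True
    let ?T = "{B. h B \<noteq> 0} \<union> {B. h' B \<noteq> 0}"
    have T: "finite ?T" "?T \<subseteq> objs sa G R"
      using HF_finite_support[OF h] HF_finite_support[OF h'] HF_support_subset[OF h] HF_support_subset[OF h']
      by auto
    have "Hact sa G R Fm a (h + h') C = (\<Sum>B\<in>?T. Fa B C a ((h + h') B))"
      by (rule Hact_eq_sum[OF HF_add[OF h h'] T _ C]) auto
    also have "\<dots> = (\<Sum>B\<in>?T. Fa B C a (h B)) + (\<Sum>B\<in>?T. Fa B C a (h' B))"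
      using T(2) F_add[OF _ C hom_of_in_homset HF_mem[OF h] HF_mem[OF h']]
      by (auto simp: sum.distrib[symmetric] intro!: sum.cong)
    also have "\<dots> = Hact sa G R Fm a h C + Hact sa G R Fm a h' C"
      using Hact_eq_sum[OF h T _ C] Hact_eq_sum[OF h' T _ C] by auto
    finally show ?thesis by simp
  qed (simp add: Hact_outside)
qed

lemma Hact_scale_right:
  assumes h: "h \<in> HF sa G R Fo"
  shows "Hact sa G R Fm a (\<lambda>B. sv c (h B)) = (\<lambda>B. sv c (Hact sa G R Fm a h B))"
proof
  fix C
  show "Hact sa G R Fm a (\<lambda>B. sv c (h B)) C = sv c (Hact sa G R Fm a h C)"
  proof (cases "C \<in> objs sa G R")
    case C: True
    let ?T = "{B. h B \<noteq> 0}"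
    have T: "finite ?T" "?T \<subseteq> objs sa G R" using HF_finite_support[OF h] HF_support_subset[OF h] by auto
    have "Hact sa G R Fm a (\<lambda>B. sv c (h B)) C = (\<Sum>B\<in>?T. Fa B C a (sv c (h B)))"
      by (rule Hact_eq_sum[OF HF_scale[OF h] T _ C]) auto
    also have "\<dots> = sv c (\<Sum>B\<in>?T. Fa B C a (h B))"
      using T(2) F_scale[OF _ C hom_of_in_homset HF_mem[OF h]]
      by (auto simp: Vv.scale_sum_right intro!: sum.cong)
    finally show ?thesis using Hact_eq_sum[OF h T _ C] by simp
  qed (simp add: Hact_outside)
qed

end

context profinite_module
begin

lemma Hact_mult:
  assumes h: "h \<in> HF sa G R Fo"
  shows "Hact sa G R Fm (a * b) h = Hact sa G R Fm a (Hact sa G R Fm b h)"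
proof
  fix D
  show "Hact sa G R Fm (a * b) h D = Hact sa G R Fm a (Hact sa G R Fm b h) D"
  proof (cases "D \<in> objs sa G R")
    case D: True
    let ?S = "{B. h B \<noteq> 0}" and ?hb = "Hact sa G R Fm b h"
    let ?K = "{C. ?hb C \<noteq> 0} \<union> (\<Union>B\<in>?S. {C \<in> objs sa G R. Fa B C b (h B) \<noteq> 0})"
    have S: "finite ?S" "?S \<subseteq> objs sa G R" using HF_finite_support[OF h] HF_support_subset[OF h] by auto
    have hb: "?hb \<in> HF sa G R Fo" by (rule Hact_closed[OF h])
    have K: "finite ?K" "?K \<subseteq> objs sa G R"
      using HF_finite_support[OF hb] HF_support_subset[OF hb] S Fa_finite_support HF_mem[OF h] by auto
    have "Hact sa G R Fm (a * b) h D = (\<Sum>B\<in>?S. Fa B D (a * b) (h B))"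
      unfolding Hact_def using D by simp
    also have "\<dots> = (\<Sum>B\<in>?S. \<Sum>C\<in>?K. Fa C D a (Fa B C b (h B)))"
    proof (rule sum.cong[OF refl])
      fix B assume "B \<in> ?S"
      then have "B \<in> objs sa G R" "{C \<in> objs sa G R. Fa B C b (h B) \<noteq> 0} \<subseteq> ?K" using S(2) by auto
      then show "Fa B D (a * b) (h B) = (\<Sum>C\<in>?K. Fa C D a (Fa B C b (h B)))"
        using Fa_mult[OF _ D HF_mem[OF h] K] by blast
    qed
    also have "\<dots> = (\<Sum>C\<in>?K. \<Sum>B\<in>?S. Fa C D a (Fa B C b (h B)))"
      by (rule sum.swap)
    also have "\<dots> = (\<Sum>C\<in>?K. Fa C D a (?hb C))"
    proof (rule sum.cong[OF refl])
      fix C assume "C \<in> ?K"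
      then have C: "C \<in> objs sa G R" using K by auto
      have "Fa C D a (\<Sum>B\<in>?S. Fa B C b (h B)) = (\<Sum>B\<in>?S. Fa C D a (Fa B C b (h B)))"
        using S(2) HF_mem[OF h] Fa_closed[OF _ C] by (intro F_sum[OF C D hom_of_in_homset]) auto
      then show "(\<Sum>B\<in>?S. Fa C D a (Fa B C b (h B))) = Fa C D a (?hb C)"
        unfolding Hact_def using C by simp
    qed
    also have "\<dots> = Hact sa G R Fm a ?hb D"
      by (rule Hact_eq_sum[OF hb K _ D, symmetric]) blast
    finally show ?thesis .
  qed (simp add: Hact_outside)
qed

lemma HF_left_module: "is_left_module sa (\<lambda>c h B. sv c (h B)) (HF sa G R Fo) (Hact sa G R Fm)"
  unfolding is_left_module_def
  by (simp add: HF_subspace Hact_closed Hact_one Hact_mult Hact_add_left Hact_add_right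
    Hact_scale_left Hact_scale_right)

definition single :: "'a set set \<Rightarrow> 'v \<Rightarrow> 'a set set \<Rightarrow> 'v" where
  "single B w = (\<lambda>C. if C = B then w else 0)"

lemma single_HF: "B \<in> objs sa G R \<Longrightarrow> w \<in> Fo B \<Longrightarrow> single B w \<in> HF sa G R Fo"
  unfolding single_def
  by (rule HFI) (auto intro: finite_subset[of _ "{B}"] Vv.subspace_0[OF F_subspace])

lemma single_in_block:
  assumes B: "B \<in> objs sa G R" and w: "w \<in> Fo B"
  shows "bpart sa G B (Hact sa G R Fm) {0} (single B w)"
proof -
  obtain m0 where m0: "m0 \<in> WB sa G B" and kills: "\<forall>x\<in>m0. Fa B B x w = 0"
    using annihilator_exists[OF B w] by blast
  have "Hact sa G R Fm x (single B w) C = 0" if x: "x \<in> m0" for x C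
  proof (cases "C \<in> objs sa G R")
    case C: True
    have "x \<in> G" using WB_subset[OF m0 B] x by blast
    then have "Hact sa G R Fm x (single B w) C = Fa C C x (single B w C)"
      by (rule Hact_G[OF single_HF[OF B w] C])
    then show ?thesis using kills x F_zero[OF C C hom_of_in_homset] unfolding single_def
      by (cases "C = B") auto
  qed (rule Hact_outside)
  then have "\<forall>x\<in>m0. Hact sa G R Fm x (single B w) \<in> {0}" by auto
  then show ?thesis unfolding bpart_def using m0 by blast
qed

text \<open>Write \<open>1 = u + w\<close> with \<open>u\<close> killing \<open>h\<close> and \<open>F\<^sub>C\<^sub>,\<^sub>C((w)) (h C) = 0\<close>.\<close>

lemma in_block_support:
  assumes B: "B \<in> objs sa G R" and h: "h \<in> HF sa G R Fo"
    and p: "bpart sa G B (Hact sa G R Fm) {0} h" and "C \<noteq> B"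
  shows "h C = 0"
proof (cases "C \<in> objs sa G R")
  case C: True
  obtain m where m: "m \<in> WB sa G B" and hm: "\<forall>x\<in>m. Hact sa G R Fm x h \<in> {0}"
    using p unfolding bpart_def by blast
  have hC: "h C \<in> Fo C" by (rule HF_mem[OF h C])
  obtain m1 n1 where m1: "m1 \<in> WB sa G C" and "n1 \<in> WB sa G C"
    and z: "\<And>x. x \<in> Jid sa m1 n1 \<Longrightarrow> Fa C C x (h C) = 0"
    using Fa_vanishes_on_Jid[OF C C hC] by blast
  obtain u w where uw: "u \<in> m" "w \<in> m1" "u + w = 1"
    using WB_comaximal[OF B C \<open>C \<noteq> B\<close>[symmetric] m m1] unfolding comaximal_def by blast
  have "u \<in> G" using WB_subset[OF m B] uw(1) by blast
  then have "Fa C C u (h C) = 0" using Hact_G[OF h C] hm uw(1) by force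
  moreover have "Fa C C w (h C) = 0" using z mem_lid[OF uw(2)] lid_subset_Jid by blast
  ultimately have "Fa C C (u + w) (h C) = 0" using Fa_add[OF C C hC] by simp
  then show ?thesis using F_id[OF C hC] uw(3) by simp
qed (rule HF_outside[OF h])

lemma HF_eq_sum_single:
  assumes h: "h \<in> HF sa G R Fo"
  shows "h = (\<Sum>B\<in>{B. h B \<noteq> 0}. single B (h B))"
proof
  fix C
  have "(\<Sum>B\<in>{B. h B \<noteq> 0}. single B (h B)) C = (\<Sum>B\<in>{B. h B \<noteq> 0}. if C = B then h B else 0)"
    unfolding sum_apply single_def ..
  also have "\<dots> = h C" using HF_finite_support[OF h] by (simp add: sum.delta)
  finally show "h C = (\<Sum>B\<in>{B. h B \<noteq> 0}. single B (h B)) C" by simp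
qed

lemma HF_block_module: "block_module sa G R (HF sa G R Fo) {0} (Hact sa G R Fm)"
  unfolding block_module_def
proof (intro conjI ballI allI impI)
  fix h assume h: "h \<in> HF sa G R Fo"
  let ?S = "{B. h B \<noteq> 0}"
  have "\<forall>B\<in>?S. single B (h B) \<in> HF sa G R Fo \<and> bpart sa G B (Hact sa G R Fm) {0} (single B (h B))"
    using HF_support_subset[OF h] single_HF single_in_block HF_mem[OF h] by blast
  moreover have "h - (\<Sum>B\<in>?S. single B (h B)) \<in> {0}" using HF_eq_sum_single[OF h] by simp
  ultimately show "\<exists>S f. finite S \<and> S \<subseteq> objs sa G R \<and>
      (\<forall>B\<in>S. f B \<in> HF sa G R Fo \<and> bpart sa G B (Hact sa G R Fm) {0} (f B)) \<and> h - (\<Sum>B\<in>S. f B) \<in> {0}"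
    using HF_finite_support[OF h] HF_support_subset[OF h]
    by (intro exI[of _ ?S] exI[of _ "\<lambda>B. single B (h B)"]) simp
next
  fix S f B
  assume "finite S \<and> S \<subseteq> objs sa G R \<and>
      (\<forall>B\<in>S. f B \<in> HF sa G R Fo \<and> bpart sa G B (Hact sa G R Fm) {0} (f B)) \<and> (\<Sum>B\<in>S. f B) \<in> {0}"
  then have S: "finite S" "S \<subseteq> objs sa G R"
    and f: "\<forall>B\<in>S. f B \<in> HF sa G R Fo \<and> bpart sa G B (Hact sa G R Fm) {0} (f B)"
    and sum0: "(\<Sum>B\<in>S. f B) = 0" by auto
  have off: "f D C = 0" if "D \<in> S" "C \<noteq> D" for D C
    using in_block_support[of D "f D" C] that f S(2) by blast
  assume "B \<in> S"
  have "f B C = 0" for C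
  proof (cases "C = B")
    case True
    have "0 = (\<Sum>D\<in>S. f D C)" using sum0 by (simp add: sum_apply[symmetric])
    also have "\<dots> = f C C + (\<Sum>D\<in>S - {C}. f D C)" using \<open>B \<in> S\<close> True S(1) by (simp add: sum.remove)
    also have "(\<Sum>D\<in>S - {C}. f D C) = 0" using off by (intro sum.neutral) auto
    finally show ?thesis using True by simp
  next
    case False
    then show ?thesis by (rule off[OF \<open>B \<in> S\<close>])
  qed
  then show "f B \<in> {0}" by auto
qed

lemma discrete_annihilator:
  assumes discrete: "discrete_Amodule sa G R sv Fo Fm" and B: "B \<in> objs sa G R"
  obtains m where "m \<in> WB sa G B" "\<forall>x\<in>m. \<forall>w\<in>Fo B. Fa B B x w = 0"
proof -
  have "\<forall>B\<in>objs sa G R. \<forall>C\<in>objs sa G R. \<forall>\<alpha>\<in>homset sa G B C.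
      \<exists>I. finite I \<and> I \<subseteq> WB sa G B \<times> WB sa G C \<and>
        (\<forall>\<beta>\<in>homset sa G B C. (\<forall>(m, n)\<in>I. \<beta> m n = \<alpha> m n) \<longrightarrow>
          (\<forall>v\<in>Fo B. Fm B C \<beta> v = Fm B C \<alpha> v))"
    using discrete unfolding discrete_Amodule_def by (rule conjunct2)
  from bspec[OF bspec[OF bspec[OF this B] B] hom_of_in_homset[of 0 B B]]
  obtain I where I: "finite I" "I \<subseteq> WB sa G B \<times> WB sa G B"
    "\<forall>\<beta>\<in>homset sa G B B. (\<forall>(m, n)\<in>I. \<beta> m n = hom_of sa G 0 B B m n) \<longrightarrow>
      (\<forall>w\<in>Fo B. Fm B B \<beta> w = Fa B B 0 w)"
    by (elim exE conjE) (intro that)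
  have "fst ` I \<union> snd ` I \<subseteq> WB sa G B" using I(2) by auto
  then obtain m where m: "m \<in> WB sa G B" "\<forall>y\<in>fst ` I \<union> snd ` I. m \<subseteq> y"
    by (rule WB_lower_bound_finite[OF finite_UnI[OF finite_imageI[OF I(1)] finite_imageI[OF I(1)]] _ B])
  have "Fa B B x w = 0" if x: "x \<in> m" and w: "w \<in> Fo B" for x w
  proof -
    have "hom_of sa G x B B mi ni = hom_of sa G 0 B B mi ni" if i: "(mi, ni) \<in> I" for mi ni
    proof -
      have mi: "mi \<in> WB sa G B" and ni: "ni \<in> WB sa G B" using I(2) i by auto
      have "mi \<in> fst ` I" using i by (metis fst_conv image_eqI)
      then have "m \<subseteq> mi" using m(2) by blast
      then have "x \<in> lid sa mi" using x mem_lid by blast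
      then have "x - 0 \<in> Jid sa mi ni" using lid_subset_Jid by auto
      then show ?thesis using hom_of_apply[OF mi ni] coset_eq_iff[OF Jid_subspace] by simp
    qed
    then have "\<forall>(mi, ni)\<in>I. hom_of sa G x B B mi ni = hom_of sa G 0 B B mi ni" by auto
    with bspec[OF I(3) hom_of_in_homset[of x B B]] have "Fa B B x w = Fa B B 0 w" using w by blast
    then show ?thesis using Fa_zero[OF B B w] by simp
  qed
  then show ?thesis using that m(1) by blast
qed

lemma HF_strong_block_module:
  assumes discrete: "discrete_Amodule sa G R sv Fo Fm"
  shows "strong_block_module sa G R (HF sa G R Fo) {0} (Hact sa G R Fm)"
  unfolding strong_block_module_def
proof (intro conjI HF_block_module ballI)
  fix B assume B: "B \<in> objs sa G R"
  obtain m where m: "m \<in> WB sa G B" and kills: "\<forall>x\<in>m. \<forall>w\<in>Fo B. Fa B B x w = 0"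
    using discrete_annihilator[OF discrete B] by blast
  have "Hact sa G R Fm x h C = 0"
    if h: "h \<in> HF sa G R Fo" and p: "bpart sa G B (Hact sa G R Fm) {0} h" and x: "x \<in> m" for h x C
  proof (cases "C \<in> objs sa G R")
    case C: True
    have "x \<in> G" using WB_subset[OF m B] x by blast
    then have "Hact sa G R Fm x h C = Fa C C x (h C)" by (rule Hact_G[OF h C])
    then show ?thesis
      using in_block_support[OF B h p] kills x HF_mem[OF h B] F_zero[OF C C hom_of_in_homset]
      by (cases "C = B") auto
  qed (rule Hact_outside)
  then have "\<forall>h\<in>HF sa G R Fo. bpart sa G B (Hact sa G R Fm) {0} h \<longrightarrow>
      (\<forall>x\<in>m. Hact sa G R Fm x h \<in> {0})" by auto
  then show "\<exists>m\<in>WB sa G B. \<forall>h\<in>HF sa G R Fo. bpart sa G B (Hact sa G R Fm) {0} h \<longrightarrow>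
      (\<forall>x\<in>m. Hact sa G R Fm x h \<in> {0})"
    using m by blast
qed

end

theorem mainTheorem13:
  fixes sa :: "'k::field \<Rightarrow> 'a::ring_1 \<Rightarrow> 'a"
    and G :: "'a set"
    and R :: "('a set \<times> 'a set) set"
    and sv :: "'k \<Rightarrow> 'v::ab_group_add \<Rightarrow> 'v"
    and Fo :: "'a set set \<Rightarrow> 'v set"
    and Fm :: "'a set set \<Rightarrow> 'a set set \<Rightarrow> 'a hom \<Rightarrow> 'v \<Rightarrow> 'v"
  assumes "kalg sa" and "subalg sa G"
    and "equiv (cfs sa G) R"
    and "strong_HC_block_subalg sa G R"
    and "vector_space sv"
    and "profinite_Amodule sa G R sv Fo Fm"
  shows "(\<forall>a B v. B \<in> objs sa G R \<longrightarrow> v \<in> Fo B \<longrightarrow>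
            finite {C \<in> objs sa G R. Fm B C (hom_of sa G a B C) v \<noteq> 0})
       \<and> is_left_module sa (\<lambda>c h B. sv c (h B)) (HF sa G R Fo) (Hact sa G R Fm)
       \<and> block_module sa G R (HF sa G R Fo) {0} (Hact sa G R Fm)
       \<and> (discrete_Amodule sa G R sv Fo Fm \<longrightarrow>
            strong_block_module sa G R (HF sa G R Fo) {0} (Hact sa G R Fm))"
proof -
  interpret profinite_module sa G R sv Fo Fm
    using assms by (intro profinite_module.intro hc_block_subalg.intro profinite_module_axioms.intro)
  show ?thesis
    using Fa_finite_support HF_left_module HF_block_module HF_strong_block_module by blast
qed

end
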